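(* Let $(\Omega,\mathfrak S,\mathbb P,\{T_z:z\in\mathcal G\})$ be a measurable ergodic dynamical system, $\ell\ge0$, and $F\in\mathcal K$. Then for each $\xi\in\mathbb Q^d\cap\mathcal U$ and $z_{1,\ell},\bar z_{1,\ell}\in\mathcal R^\ell$, \[\lim_{n\to\infty}\max_{(a_1,\dots,a_n)\in\mathcal A_n(\xi,z_{1,\ell},\bar z_{1,\ell})}\Big|\frac1n\sum_{i=0}^{n-1}F(\eta_i,a_{i+1})\Big|=0\] in $L^1(\mathbb P)$ and for $\mathbb P$-a.e. $\omega$, where $\eta_0=(\omega,z_{1,\ell})$ and $\eta_i=S_{a_i}\eta_{i-1}$.
   Context: Fix $d$, finite $\mathcal R\subset\mathbb Z^d$, $\mathcal G$ the additive subgroup generated by $\mathcal R$; $T_z$ ($z\in\mathcal G$) measurable commuting bijections with $T_{x+y}=T_xT_y$, $T_0=\mathrm{id}$, $\mathbb P$ invariant and ergodic; $\mathbb E$ expectation. $\Omega_\ell=\Omega\times\mathcal R^\ell$, elements $\eta=(\omega,z_{1,\ell})$ with $z_{i,j}=(z_i,\dots,z_j)$; $S_z(\omega,z_{1,\ell})=(T_{z_1}\omega,(z_{2,\ell},z))$ ($S_z\omega=T_z\omega$ if $\ell=0$). Class $\mathcal K$: measurable $F:\Omega_\ell\times\mathcal R\to\mathbb R$ with (i) $F(\cdot,z_{1,\ell},z)\in L^1(\mathbb P)$; (ii) for all $n\ge\ell$ and $a_{1,n}\in\mathcal R^n$, with $\eta_0=(\omega,a_{n-\ell+1,n})$, $\eta_i=S_{a_i}\eta_{i-1}$: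 $\mathbb E[\sum_{i=0}^{n-1}F(\eta_i,a_{i+1})]=0$; (iii) for a.e. $\omega$, any two step sequences $a_{1,n}$, $\bar a_{1,m}$ from a common start $\eta_0=\bar\eta_0=(\omega,z_{1,\ell})$ with $\eta_n=\bar\eta_m$ give equal sums $\sum_{i<n}F(\eta_i,a_{i+1})=\sum_{j<m}F(\bar\eta_j,\bar a_{j+1})$. $\mathcal U$ is the convex hull of $\mathcal R$; $D_n=\{z_1+\dots+z_n:z_{1,n}\in\mathcal R^n\}$. For each rational $\xi\in\mathcal U$ an integer $b(\xi)\ge1$ with $b(\xi)\xi\in D_{b(\xi)}$ and a path $\hat x_n(\xi)$ with $\hat x_0(\xi)=0$, steps in $\mathcal R$, and $\hat x_{jb(\xi)}(\xi)=jb(\xi)\xi$ are fixed. $\mathcal A_n(\xi,z_{1,\ell},\bar z_{1,\ell})$ is the set of $(a_1,\dots,a_n)\in\mathcal R^n$ with $z_1+\dots+z_\ell+a_1+\dots+a_{n-\ell}=\hat x_n(\xi)$ and $a_{n-\ell+1,n}=\bar z_{1,\ell}$. *)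

theory Defs
  imports "HOL-Probability.Probability"
begin

type_synonym 'd zvec = "int ^ 'd"

definition vec_of_int :: "int ^ 'd \<Rightarrow> real ^ 'd" where
  "vec_of_int z = (\<chi> i. real_of_int (z $ i))"

inductive_set gen_group :: "(int ^ 'd) set \<Rightarrow> (int ^ 'd) set" for R where
  gen_zero: "0 \<in> gen_group R"
| gen_base: "z \<in> R \<Longrightarrow> z \<in> gen_group R"
| gen_add: "x \<in> gen_group R \<Longrightarrow> y \<in> gen_group R \<Longrightarrow> x + y \<in> gen_group R"
| gen_neg: "x \<in> gen_group R \<Longrightarrow> - x \<in> gen_group R"

definition ergodic_system ::
    "'a measure \<Rightarrow> (int ^ 'd) set \<Rightarrow> (int ^ 'd \<Rightarrow> 'a \<Rightarrow> 'a) \<Rightarrow> bool" where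
  "ergodic_system M R T \<longleftrightarrow>
     prob_space M \<and>
     (\<forall>z\<in>gen_group R. T z \<in> M \<rightarrow>\<^sub>M M \<and> bij_betw (T z) (space M) (space M)
                         \<and> distr M M (T z) = M) \<and>
     (\<forall>\<omega>\<in>space M. T 0 \<omega> = \<omega>) \<and>
     (\<forall>x\<in>gen_group R. \<forall>y\<in>gen_group R. \<forall>\<omega>\<in>space M. T (x + y) \<omega> = T x (T y \<omega>)) \<and>
     (\<forall>A\<in>sets M. (\<forall>z\<in>gen_group R. T z -` A \<inter> space M = A)
                  \<longrightarrow> measure M A = 0 \<or> measure M A = 1)"

text \<open>The shift S_z on Omega_l = Omega x R^l; elements of R^l are lists of length l.
  For l = 0 (empty list) it is just T_z.\<close>
fun shiftS :: "(int ^ 'd \<Rightarrow> 'a \<Rightarrow> 'a) \<Rightarrow> int ^ 'd \<Rightarrow> 'a \<times> (int ^ 'd) list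
                 \<Rightarrow> 'a \<times> (int ^ 'd) list" where
  "shiftS T z (\<omega>, []) = (T z \<omega>, [])"
| "shiftS T z (\<omega>, z1 # zs) = (T z1 \<omega>, zs @ [z])"

text \<open>The path eta_0 = eta0, eta_(i+1) = S_(a_(i+1)) eta_i; the step list a is 0-indexed,
  i.e. a ! i is the paper's a_(i+1).\<close>
fun eta :: "(int ^ 'd \<Rightarrow> 'a \<Rightarrow> 'a) \<Rightarrow> 'a \<times> (int ^ 'd) list \<Rightarrow> (int ^ 'd) list
              \<Rightarrow> nat \<Rightarrow> 'a \<times> (int ^ 'd) list" where
  "eta T e0 a 0 = e0"
| "eta T e0 a (Suc i) = shiftS T (a ! i) (eta T e0 a i)"

definition path_sum ::
    "(int ^ 'd \<Rightarrow> 'a \<Rightarrow> 'a) \<Rightarrow> ('a \<times> (int ^ 'd) list \<Rightarrow> int ^ 'd \<Rightarrow> real)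
     \<Rightarrow> 'a \<times> (int ^ 'd) list \<Rightarrow> (int ^ 'd) list \<Rightarrow> real" where
  "path_sum T F e0 a = (\<Sum>i<length a. F (eta T e0 a i) (a ! i))"

definition classK ::
    "'a measure \<Rightarrow> (int ^ 'd) set \<Rightarrow> (int ^ 'd \<Rightarrow> 'a \<Rightarrow> 'a) \<Rightarrow> nat
     \<Rightarrow> ('a \<times> (int ^ 'd) list \<Rightarrow> int ^ 'd \<Rightarrow> real) \<Rightarrow> bool" where
  "classK M R T l F \<longleftrightarrow>
     (\<forall>zs z. set zs \<subseteq> R \<and> length zs = l \<and> z \<in> R \<longrightarrow> integrable M (\<lambda>\<omega>. F (\<omega>, zs) z)) \<and>
     (\<forall>n a. n \<ge> l \<and> length a = n \<and> set a \<subseteq> R \<longrightarrow>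
        integral\<^sup>L M (\<lambda>\<omega>. path_sum T F (\<omega>, drop (n - l) a) a) = 0) \<and>
     (AE \<omega> in M. \<forall>zs a a'. set zs \<subseteq> R \<and> length zs = l \<and> set a \<subseteq> R \<and> set a' \<subseteq> R \<and>
        eta T (\<omega>, zs) a (length a) = eta T (\<omega>, zs) a' (length a') \<longrightarrow>
        path_sum T F (\<omega>, zs) a = path_sum T F (\<omega>, zs) a')"

definition Dn :: "(int ^ 'd) set \<Rightarrow> nat \<Rightarrow> (int ^ 'd) set" where
  "Dn R n = {sum_list a | a. length a = n \<and> set a \<subseteq> R}"

definition rat_vec :: "real ^ 'd \<Rightarrow> bool" where
  "rat_vec \<xi> \<longleftrightarrow> (\<forall>i. \<xi> $ i \<in> \<rat>)"

text \<open>The set A_n(xi, zs, zbar), for the fixed path xhat = xhat(xi) (given as a function of n).\<close>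
definition An :: "(int ^ 'd) set \<Rightarrow> nat \<Rightarrow> (nat \<Rightarrow> int ^ 'd) \<Rightarrow> nat
                  \<Rightarrow> (int ^ 'd) list \<Rightarrow> (int ^ 'd) list \<Rightarrow> (int ^ 'd) list set" where
  "An R l xhat n zs zbar =
     {a. length a = n \<and> set a \<subseteq> R \<and>
         sum_list zs + sum_list (take (n - l) a) = xhat n \<and> drop (n - l) a = zbar}"

text \<open>max over A_n of |(1/n) sum_(i<n) F(eta_i,a_(i+1))|, with eta_0 = (omega, zs);
  by convention the max over an empty set is 0 (all values are nonnegative).\<close>
definition max_avg ::
    "(int ^ 'd) set \<Rightarrow> nat \<Rightarrow> (int ^ 'd \<Rightarrow> 'a \<Rightarrow> 'a)
     \<Rightarrow> ('a \<times> (int ^ 'd) list \<Rightarrow> int ^ 'd \<Rightarrow> real) \<Rightarrow> (nat \<Rightarrow> int ^ 'd)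
     \<Rightarrow> (int ^ 'd) list \<Rightarrow> (int ^ 'd) list \<Rightarrow> nat \<Rightarrow> 'a \<Rightarrow> real" where
  "max_avg R l T F xhat zs zbar n \<omega> =
     Max (insert 0 ((\<lambda>a. \<bar>path_sum T F (\<omega>, zs) a / real n\<bar>) ` An R l xhat n zs zbar))"

end

theory Submission
  imports Defs
begin

text \<open>
  Off a null set, the cocycle property (iii) gives all admissible paths from \<open>(\<omega>, zs)\<close> to
  \<open>(T (xhat n) \<omega>, zbar)\<close> the same sum, so the maximum is the absolute value of a single sum.
  Fix a word \<open>c\<close> of length \<open>b\<close> with sum \<open>v = b \<xi>\<close>. Running through \<open>c\<close> periodically turns path
  sums into Birkhoff sums, along \<open>T v\<close>, of the sum \<open>\<phi>\<close> over one period, and \<open>\<phi>\<close> has mean zero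
  by (ii). The map \<open>T v\<close> alone need not be ergodic, but the cocycle property shows that the
  (clipped) upper limit of the Birkhoff averages is also invariant under every \<open>T z\<close>, \<open>z \<in> \<R>\<close>,
  up to errors that vanish by Borel--Cantelli; so it is constant by ergodicity of the whole action,
  and the maximal ergodic lemma excludes a positive constant. An admissible path of length \<open>n\<close>
  may be replaced by a fixed approach to the ray \<open>\<real> \<xi>\<close>, then about \<open>n / b\<close> periods of \<open>c\<close>,
  then a tail of bounded length; this gives almost sure convergence. Convergence in \<open>L\<^sup>1\<close> follows
  because the averages are dominated by averages of translates of one integrable function.
\<close>

lemma count_multiples_less:
  fixes x \<epsilon> :: real
  assumes "\<epsilon> > 0" "x \<ge> 0"
  shows "(\<Sum>k<N. if \<epsilon> * real k < x then 1 else 0 :: real) \<le> 1 + x / \<epsilon>"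
proof -
  define K where "K = nat \<lceil>x / \<epsilon>\<rceil>"
  have "(\<Sum>k<N. if \<epsilon> * real k < x then 1 else 0 :: real) \<le> (\<Sum>k<N. if k < K then 1 else 0)"
  proof (intro sum_mono)
    fix k
    have "k < K" if "\<epsilon> * real k < x"
    proof -
      have "real k < x / \<epsilon>" using that assms by (simp add: field_simps)
      also have "\<dots> \<le> real_of_int \<lceil>x / \<epsilon>\<rceil>" by (rule le_of_int_ceiling)
      finally show "k < K" unfolding K_def by linarith
    qed
    then show "(if \<epsilon> * real k < x then 1 else 0 :: real) \<le> (if k < K then 1 else 0)" by auto
  qed
  also have "\<dots> = real (min N K)"
    by (induction N) (auto simp: min_def)
  also have "\<dots> \<le> real K" by simp
  also have "\<dots> \<le> 1 + x / \<epsilon>"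
    using assms ceiling_correct[of "x / \<epsilon>"] by (simp add: K_def of_nat_nat)
  finally show ?thesis .
qed

definition clip01 :: "real \<Rightarrow> real" where
  "clip01 x = max 0 (min 1 x)"

lemma clip01_lipschitz: "\<bar>clip01 x - clip01 y\<bar> \<le> \<bar>x - y\<bar>"
  unfolding clip01_def by (simp add: abs_if max_def min_def)

lemma clip01_scale:
  assumes d: "0 \<le> d"
  shows "\<bar>clip01 ((1 + d) * a) - clip01 a\<bar> \<le> d"
proof (cases "a \<le> 0")
  case True
  then have "(1 + d) * a \<le> 0" using d by (simp add: mult_nonneg_nonpos)
  then show ?thesis using True d by (simp add: clip01_def)
next
  case False
  then have a: "0 < a" "0 \<le> a * d" using d by simp_all
  show ?thesis
  proof (cases "1 \<le> a")
    case True
    then have "1 \<le> (1 + d) * a" using a by (simp add: algebra_simps)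
    then show ?thesis using True d by (simp add: clip01_def)
  next
    case False
    then have "a * d \<le> d" using d a by (simp add: mult_left_le_one_le)
    then show ?thesis using False a d by (auto simp: clip01_def algebra_simps abs_if min_def max_def)
  qed
qed

lemma clip01_less_imp: "0 \<le> \<beta> \<Longrightarrow> \<beta> < clip01 x \<Longrightarrow> \<beta> < x"
  unfolding clip01_def by (auto simp: max_def min_def split: if_splits)

lemma less_clip01_imp: "e \<le> 1 \<Longrightarrow> clip01 x < e \<Longrightarrow> x < e"
  unfolding clip01_def by (auto simp: max_def min_def split: if_splits)

lemma limsup_ereal_le_of_diff_tendsto_0:
  fixes x y :: "nat \<Rightarrow> real"
  assumes "(\<lambda>k. x k - y k) \<longlonglongrightarrow> 0"
  shows "limsup (\<lambda>k. ereal (x k)) \<le> limsup (\<lambda>k. ereal (y k))"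
proof (rule ereal_le_epsilon2)
  fix e :: real assume "0 < e"
  then have close: "eventually (\<lambda>k. x k - y k < e) sequentially"
    using order_tendstoD(2)[OF assms] by blast
  have "limsup (\<lambda>k. ereal (x k)) \<le> limsup (\<lambda>k. ereal (y k) + ereal e)"
    by (rule Limsup_mono) (use close in \<open>auto elim: eventually_mono\<close>)
  also have "\<dots> \<le> limsup (\<lambda>k. ereal (y k)) + limsup (\<lambda>k. ereal e)"
    by (rule ereal_limsup_add_mono)
  finally show "limsup (\<lambda>k. ereal (x k)) \<le> limsup (\<lambda>k. ereal (y k)) + ereal e"
    by (simp add: Limsup_const)
qed

lemma limsup_ereal_eq_of_diff_tendsto_0:
  fixes x y :: "nat \<Rightarrow> real"
  assumes "(\<lambda>k. x k - y k) \<longlonglongrightarrow> 0"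
  shows "limsup (\<lambda>k. ereal (x k)) = limsup (\<lambda>k. ereal (y k))"
proof (rule antisym)
  have "(\<lambda>k. y k - x k) \<longlonglongrightarrow> 0"
    using tendsto_minus[OF assms] by simp
  then show "limsup (\<lambda>k. ereal (y k)) \<le> limsup (\<lambda>k. ereal (x k))"
    by (rule limsup_ereal_le_of_diff_tendsto_0)
qed (rule limsup_ereal_le_of_diff_tendsto_0[OF assms])

lemma tendsto_const_div_real: "(\<lambda>k. C / real k) \<longlonglongrightarrow> 0"
  by (rule tendsto_divide_0[OF tendsto_const filterlim_at_top_imp_at_infinity[OF filterlim_real_sequentially]])

section \<open>Birkhoff sums of a measure-preserving map\<close>

definition birkhoff_sum :: "('a \<Rightarrow> 'a) \<Rightarrow> ('a \<Rightarrow> real) \<Rightarrow> nat \<Rightarrow> 'a \<Rightarrow> real" where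
  "birkhoff_sum f \<psi> k \<omega> = (\<Sum>i<k. \<psi> ((f ^^ i) \<omega>))"

lemma birkhoff_sum_0 [simp]: "birkhoff_sum f \<psi> 0 \<omega> = 0"
  by (simp add: birkhoff_sum_def)

lemma birkhoff_sum_Suc: "birkhoff_sum f \<psi> (Suc k) \<omega> = \<psi> \<omega> + birkhoff_sum f \<psi> k (f \<omega>)"
  unfolding birkhoff_sum_def by (subst sum.lessThan_Suc_shift) (simp add: funpow_swap1)

definition max_birkhoff_sum :: "('a \<Rightarrow> 'a) \<Rightarrow> ('a \<Rightarrow> real) \<Rightarrow> nat \<Rightarrow> 'a \<Rightarrow> real" where
  "max_birkhoff_sum f \<psi> N \<omega> = Max ((\<lambda>k. birkhoff_sum f \<psi> k \<omega>) ` {..N})"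

lemma birkhoff_sum_le_max: "k \<le> N \<Longrightarrow> birkhoff_sum f \<psi> k \<omega> \<le> max_birkhoff_sum f \<psi> N \<omega>"
  unfolding max_birkhoff_sum_def by (intro Max_ge) auto

lemma max_birkhoff_sum_nonneg: "0 \<le> max_birkhoff_sum f \<psi> N \<omega>"
  using birkhoff_sum_le_max[of 0 N f \<psi> \<omega>] by simp

lemma max_birkhoff_sum_Suc:
  "max_birkhoff_sum f \<psi> (Suc N) \<omega> = max (birkhoff_sum f \<psi> (Suc N) \<omega>) (max_birkhoff_sum f \<psi> N \<omega>)"
  unfolding max_birkhoff_sum_def atMost_Suc image_insert by (subst Max_insert) auto

lemma max_birkhoff_sum_le_shift:
  assumes "0 < max_birkhoff_sum f \<psi> N \<omega>"
  shows "max_birkhoff_sum f \<psi> N \<omega> \<le> \<psi> \<omega> + max_birkhoff_sum f \<psi> N (f \<omega>)"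
proof -
  have "max_birkhoff_sum f \<psi> N \<omega> \<in> (\<lambda>k. birkhoff_sum f \<psi> k \<omega>) ` {..N}"
    unfolding max_birkhoff_sum_def by (intro Max_in) auto
  then obtain k where k: "k \<le> N" "max_birkhoff_sum f \<psi> N \<omega> = birkhoff_sum f \<psi> k \<omega>"
    by auto
  with assms obtain k' where k': "k = Suc k'" by (cases k) auto
  have "birkhoff_sum f \<psi> k' (f \<omega>) \<le> max_birkhoff_sum f \<psi> N (f \<omega>)"
    using k k' by (intro birkhoff_sum_le_max) simp
  then show ?thesis using k k' by (simp add: birkhoff_sum_Suc)
qed

locale measure_preserving_map = prob_space M for M :: "'a measure" +
  fixes f :: "'a \<Rightarrow> 'a"
  assumes measurable_map: "f \<in> M \<rightarrow>\<^sub>M M" and distr_map: "distr M M f = M"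
begin

lemma measurable_funpow [measurable]: "f ^^ k \<in> M \<rightarrow>\<^sub>M M"
  using measurable_map by (rule measurable_compose_n)

lemma funpow_space: "\<omega> \<in> space M \<Longrightarrow> (f ^^ k) \<omega> \<in> space M"
  using measurable_space[OF measurable_funpow] .

lemma distr_funpow: "distr M M (f ^^ k) = M"
proof (induction k)
  case (Suc k)
  have "distr M M (f ^^ Suc k) = distr (distr M M (f ^^ k)) M f"
    by (simp add: distr_distr measurable_map comp_def)
  then show ?case using Suc distr_map by (simp add: comp_def)
qed (simp add: id_def)

lemma integrable_funpow:
  fixes \<psi> :: "'a \<Rightarrow> real"
  assumes "integrable M \<psi>"
  shows "integrable M (\<lambda>\<omega>. \<psi> ((f ^^ k) \<omega>))"
  using integrable_distr_eq[OF measurable_funpow borel_measurable_integrable[OF assms]] assms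
  by (simp add: distr_funpow)

lemma integral_funpow:
  fixes \<psi> :: "'a \<Rightarrow> real"
  assumes "\<psi> \<in> borel_measurable M"
  shows "(\<integral>\<omega>. \<psi> ((f ^^ k) \<omega>) \<partial>M) = integral\<^sup>L M \<psi>"
  using integral_distr[OF measurable_funpow assms] by (simp add: distr_funpow)

lemma measure_funpow_vimage:
  "A \<in> sets M \<Longrightarrow> measure M ((f ^^ k) -` A \<inter> space M) = measure M A"
  using measure_distr[OF measurable_funpow, of A k] by (simp add: distr_funpow)

lemma AE_comp_map:
  assumes "AE \<omega> in M. P \<omega>"
  shows "AE \<omega> in M. P (f \<omega>)"
proof -
  obtain N where N: "N \<in> null_sets M" "{\<omega>\<in>space M. \<not> P \<omega>} \<subseteq> N"
    using assms by (auto simp: eventually_ae_filter)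
  have "emeasure M (f -` N \<inter> space M) = emeasure M N"
    using emeasure_distr[OF measurable_map null_setsD2[OF N(1)]] distr_map by simp
  then have "f -` N \<inter> space M \<in> null_sets M"
    using N(1) measurable_sets[OF measurable_map null_setsD2[OF N(1)]] by (simp add: null_sets_def)
  then show ?thesis
    by (rule AE_I') (use N(2) measurable_space[OF measurable_map] in auto)
qed

lemma integrable_comp_map:
  fixes \<psi> :: "'a \<Rightarrow> real"
  shows "integrable M \<psi> \<Longrightarrow> integrable M (\<lambda>\<omega>. \<psi> (f \<omega>))"
  using integrable_funpow[where k = 1] by simp

lemma integral_comp_map:
  fixes \<psi> :: "'a \<Rightarrow> real"
  shows "\<psi> \<in> borel_measurable M \<Longrightarrow> (\<integral>\<omega>. \<psi> (f \<omega>) \<partial>M) = integral\<^sup>L M \<psi>"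
  using integral_funpow[where k = 1] by simp

lemma integrable_birkhoff_sum:
  fixes \<psi> :: "'a \<Rightarrow> real"
  shows "integrable M \<psi> \<Longrightarrow> integrable M (birkhoff_sum f \<psi> k)"
  unfolding birkhoff_sum_def[abs_def] by (intro Bochner_Integration.integrable_sum integrable_funpow)

lemma integrable_max_birkhoff_sum:
  fixes \<psi> :: "'a \<Rightarrow> real"
  assumes "integrable M \<psi>"
  shows "integrable M (max_birkhoff_sum f \<psi> N)"
proof (induction N)
  case 0
  then show ?case by (simp add: max_birkhoff_sum_def)
next
  case (Suc N)
  then show ?case
    unfolding max_birkhoff_sum_Suc by (intro integrable_max integrable_birkhoff_sum assms)
qed

lemma maximal_ergodic:
  fixes \<psi> :: "'a \<Rightarrow> real"
  assumes \<psi>: "integrable M \<psi>"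
  shows "0 \<le> (\<integral>\<omega>. \<psi> \<omega> * indicator {\<omega>\<in>space M. 0 < max_birkhoff_sum f \<psi> N \<omega>} \<omega> \<partial>M)"
proof -
  let ?Smax = "max_birkhoff_sum f \<psi> N"
  let ?P = "{\<omega>\<in>space M. 0 < ?Smax \<omega>}"
  have Smax: "integrable M ?Smax"
    by (rule integrable_max_birkhoff_sum[OF \<psi>])
  have "(\<integral>\<omega>. ?Smax \<omega> - ?Smax (f \<omega>) \<partial>M) \<le> (\<integral>\<omega>. \<psi> \<omega> * indicator ?P \<omega> \<partial>M)"
  proof (rule integral_mono)
    show "integrable M (\<lambda>\<omega>. ?Smax \<omega> - ?Smax (f \<omega>))"
      using Smax integrable_comp_map[OF Smax] by simp
    have "?P \<in> sets M"
      using borel_measurable_integrable[OF Smax] by measurable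
    then show "integrable M (\<lambda>\<omega>. \<psi> \<omega> * indicator ?P \<omega>)"
      using integrable_mult_indicator[OF _ \<psi>] by (simp add: mult.commute)
    fix \<omega> assume "\<omega> \<in> space M"
    then show "?Smax \<omega> - ?Smax (f \<omega>) \<le> \<psi> \<omega> * indicator ?P \<omega>"
      using max_birkhoff_sum_le_shift[of f \<psi> N \<omega>] max_birkhoff_sum_nonneg[of f \<psi> N \<omega>]
        max_birkhoff_sum_nonneg[of f \<psi> N "f \<omega>"]
      by (cases "0 < ?Smax \<omega>") auto
  qed
  moreover have "(\<integral>\<omega>. ?Smax \<omega> - ?Smax (f \<omega>) \<partial>M) = 0"
    using Bochner_Integration.integral_diff[OF Smax integrable_comp_map[OF Smax]]
      integral_comp_map[OF borel_measurable_integrable[OF Smax]] by simp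
  ultimately show ?thesis by simp
qed

lemma integral_nonneg_if_AE_birkhoff_sum_pos:
  fixes \<psi> :: "'a \<Rightarrow> real"
  assumes \<psi>: "integrable M \<psi>" and pos: "AE \<omega> in M. \<exists>k. birkhoff_sum f \<psi> k \<omega> > 0"
  shows "integral\<^sup>L M \<psi> \<ge> 0"
proof -
  define P where "P N = {\<omega>\<in>space M. 0 < max_birkhoff_sum f \<psi> N \<omega>}" for N
  have "(\<lambda>N. \<integral>\<omega>. \<psi> \<omega> * indicator (P N) \<omega> \<partial>M) \<longlonglongrightarrow> integral\<^sup>L M \<psi>"
  proof (rule integral_dominated_convergence[where w = "\<lambda>\<omega>. norm (\<psi> \<omega>)"])
    show "AE \<omega> in M. (\<lambda>N. \<psi> \<omega> * indicator (P N) \<omega>) \<longlonglongrightarrow> \<psi> \<omega>"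
      using pos AE_space
    proof eventually_elim
      case (elim \<omega>)
      then obtain k where k: "birkhoff_sum f \<psi> k \<omega> > 0" by blast
      have "\<omega> \<in> P N" if "k \<le> N" for N
        using elim k birkhoff_sum_le_max[OF that, of f \<psi> \<omega>] by (simp add: P_def)
      then have "\<forall>N\<ge>k. \<psi> \<omega> * indicator (P N) \<omega> = \<psi> \<omega>" by simp
      then show ?case by (intro tendsto_eventually) (auto simp: eventually_sequentially)
    qed
    show "(\<lambda>\<omega>. \<psi> \<omega> * indicator (P N) \<omega>) \<in> borel_measurable M" for N
      unfolding P_def
      using borel_measurable_integrable[OF integrable_max_birkhoff_sum[OF \<psi>, of N]] \<psi> by measurable
  qed (use \<psi> in \<open>auto simp: indicator_def\<close>)
  then show ?thesis
    using maximal_ergodic[OF \<psi>] by (intro LIMSEQ_le_const) (auto simp: P_def)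
qed

lemma AE_eventually_funpow_le:
  fixes \<psi> :: "'a \<Rightarrow> real"
  assumes \<psi>: "integrable M \<psi>" "\<And>\<omega>. \<psi> \<omega> \<ge> 0" and \<epsilon>: "\<epsilon> > 0"
  shows "AE \<omega> in M. eventually (\<lambda>k. \<psi> ((f ^^ k) \<omega>) \<le> \<epsilon> * real k) sequentially"
proof -
  define B where "B k = {\<omega>\<in>space M. \<epsilon> * real k < \<psi> \<omega>}" for k
  have B_sets: "B k \<in> sets M" for k
    unfolding B_def using borel_measurable_integrable[OF \<psi>(1)] by measurable
  have B_int: "integrable M (indicator (B k) :: 'a \<Rightarrow> real)" for k
    using B_sets by (simp add: emeasure_eq_measure)
  have "summable (\<lambda>k. measure M ((f ^^ k) -` B k \<inter> space M))"
  proof (rule summableI_nonneg_bounded)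
    fix N
    have "(\<Sum>k<N. measure M ((f ^^ k) -` B k \<inter> space M)) = (\<integral>\<omega>. (\<Sum>k<N. indicator (B k) \<omega>) \<partial>M)"
      using B_sets B_int by (simp add: measure_funpow_vimage Bochner_Integration.integral_sum)
    also have "\<dots> \<le> (\<integral>\<omega>. 1 + \<psi> \<omega> / \<epsilon> \<partial>M)"
    proof (rule integral_mono)
      fix \<omega> assume "\<omega> \<in> space M"
      then have "(\<Sum>k<N. indicator (B k) \<omega>) = (\<Sum>k<N. if \<epsilon> * real k < \<psi> \<omega> then 1 else 0 :: real)"
        by (intro sum.cong) (auto simp: B_def)
      also have "\<dots> \<le> 1 + \<psi> \<omega> / \<epsilon>" by (rule count_multiples_less[OF \<epsilon> \<psi>(2)])
      finally show "(\<Sum>k<N. indicator (B k) \<omega>) \<le> 1 + \<psi> \<omega> / \<epsilon>" .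
    qed (use B_int \<psi>(1) in auto)
    finally show "(\<Sum>k<N. measure M ((f ^^ k) -` B k \<inter> space M)) \<le> (\<integral>\<omega>. 1 + \<psi> \<omega> / \<epsilon> \<partial>M)" .
  qed simp
  moreover have "(f ^^ k) -` B k \<inter> space M \<in> sets M" for k
    using measurable_sets[OF measurable_funpow B_sets] .
  ultimately have "AE \<omega> in M. eventually (\<lambda>k. \<omega> \<in> space M - ((f ^^ k) -` B k \<inter> space M)) sequentially"
    by (intro borel_cantelli_AE1) (auto simp: emeasure_eq_measure)
  then show ?thesis
    by (rule eventually_mono) (auto elim!: eventually_mono simp: B_def funpow_space)
qed

lemma AE_funpow_div_tendsto_0:
  fixes \<psi> :: "'a \<Rightarrow> real"
  assumes \<psi>: "integrable M \<psi>" "\<And>\<omega>. \<psi> \<omega> \<ge> 0"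
  shows "AE \<omega> in M. (\<lambda>k. \<psi> ((f ^^ k) \<omega>) / real k) \<longlonglongrightarrow> 0"
proof -
  have "AE \<omega> in M. \<forall>m. eventually (\<lambda>k. \<psi> ((f ^^ k) \<omega>) \<le> 1 / real (Suc m) * real k) sequentially"
    using assms by (subst AE_all_countable, intro allI AE_eventually_funpow_le) auto
  then show ?thesis
  proof (rule eventually_mono)
    fix \<omega> assume le: "\<forall>m. eventually (\<lambda>k. \<psi> ((f ^^ k) \<omega>) \<le> 1 / real (Suc m) * real k) sequentially"
    show "(\<lambda>k. \<psi> ((f ^^ k) \<omega>) / real k) \<longlonglongrightarrow> 0"
    proof (rule order_tendstoI)
      fix a :: real assume "a < 0"
      then show "eventually (\<lambda>k. a < \<psi> ((f ^^ k) \<omega>) / real k) sequentially"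
        using \<psi>(2) by (intro always_eventually) (simp add: less_le_trans[OF _ divide_nonneg_nonneg])
    next
      fix a :: real assume "0 < a"
      then obtain m where m: "1 / real (Suc m) < a" by (metis nat_approx_posE)
      show "eventually (\<lambda>k. \<psi> ((f ^^ k) \<omega>) / real k < a) sequentially"
        using le[rule_format, of m] eventually_gt_at_top[of 0]
      proof eventually_elim
        case (elim k)
        then have "\<psi> ((f ^^ k) \<omega>) / real k \<le> 1 / real (Suc m)" by (simp add: field_simps)
        then show ?case using m by linarith
      qed
    qed
  qed
qed

end

section \<open>Paths of the walk\<close>

lemma gen_group_sum_list: "set xs \<subseteq> R \<Longrightarrow> sum_list xs \<in> gen_group R"
  by (induction xs) (auto intro: gen_group.intros)

lemma gen_group_diff: "x \<in> gen_group R \<Longrightarrow> y \<in> gen_group R \<Longrightarrow> x - y \<in> gen_group R"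
  by (metis diff_conv_add_uminus gen_add gen_neg)

lemma gen_group_of_nat_mult: "v \<in> gen_group R \<Longrightarrow> (of_nat k :: int ^ 'd) * v \<in> gen_group R"
  by (induction k) (auto simp: distrib_right intro: gen_group.intros)

lemma sum_lessThan_add: "(\<Sum>i<m + n. f i) = (\<Sum>i<m. f i) + (\<Sum>i<n. f (m + i))"
  for f :: "nat \<Rightarrow> 'b::comm_monoid_add"
  by (induction n) (auto simp: add.assoc)

lemma sum_list_take_drop: "sum_list (take n xs) + sum_list (drop n xs) = sum_list xs"
  by (metis append_take_drop_id sum_list_append)

lemma eta_append_left: "i \<le> length a \<Longrightarrow> eta T e (a @ b) i = eta T e a i"
  by (induction i) (auto simp: nth_append)

lemma eta_append_right:
  "i \<le> length b \<Longrightarrow> eta T e (a @ b) (length a + i) = eta T (eta T e a (length a)) b i"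
  by (induction i) (auto simp: eta_append_left nth_append)

lemma eta_end_append:
  "eta T e (a @ b) (length (a @ b)) = eta T (eta T e a (length a)) b (length b)"
  using eta_append_right[of "length b" b T e a] by simp

lemma path_sum_append:
  "path_sum T F e (a @ b) = path_sum T F e a + path_sum T F (eta T e a (length a)) b"
proof -
  have "path_sum T F e (a @ b) = (\<Sum>i<length a. F (eta T e (a @ b) i) ((a @ b) ! i))
      + (\<Sum>i<length b. F (eta T e (a @ b) (length a + i)) ((a @ b) ! (length a + i)))"
    unfolding path_sum_def by (simp add: sum_lessThan_add)
  then show ?thesis
    unfolding path_sum_def by (simp add: eta_append_left eta_append_right nth_append)
qed

lemma path_sum_uminus: "path_sum T (\<lambda>e z. - F e z) e a = - path_sum T F e a"
  by (simp add: path_sum_def sum_negf)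

lemma classK_uminus: "classK M R T l F \<Longrightarrow> classK M R T l (\<lambda>e z. - F e z)"
  unfolding classK_def path_sum_uminus by auto

definition list_pow :: "'x list \<Rightarrow> nat \<Rightarrow> 'x list" where
  "list_pow c k = concat (replicate k c)"

lemma list_pow_0 [simp]: "list_pow c 0 = []"
  by (simp add: list_pow_def)

lemma list_pow_Suc: "list_pow c (Suc k) = c @ list_pow c k"
  by (simp add: list_pow_def)

lemma list_pow_add: "list_pow c (m + n) = list_pow c m @ list_pow c n"
  by (induction m) (auto simp: list_pow_Suc)

lemma list_pow_Suc_right: "list_pow c (Suc k) = list_pow c k @ c"
  using list_pow_add[of c k 1] by (simp add: list_pow_Suc)

lemma length_list_pow [simp]: "length (list_pow c k) = k * length c"
  by (induction k) (auto simp: list_pow_Suc)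

lemma set_list_pow: "set (list_pow c k) \<subseteq> set c"
  by (induction k) (auto simp: list_pow_Suc)

lemma sum_list_pow: "sum_list (list_pow c k) = of_nat k * sum_list c"
  by (induction k) (auto simp: list_pow_Suc distrib_right)

section \<open>The ergodic lattice action\<close>

locale lattice_action =
  fixes M :: "'a measure" and R :: "(int ^ 'd) set" and T :: "int ^ 'd \<Rightarrow> 'a \<Rightarrow> 'a"
  assumes ergodic: "ergodic_system M R T"
begin

abbreviation "G \<equiv> gen_group R"

sublocale prob_space M
  using ergodic by (simp add: ergodic_system_def)

lemma T_measurable: "x \<in> G \<Longrightarrow> T x \<in> M \<rightarrow>\<^sub>M M"
  using ergodic by (simp add: ergodic_system_def)

lemma T_zero: "\<omega> \<in> space M \<Longrightarrow> T 0 \<omega> = \<omega>"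
  using ergodic by (simp add: ergodic_system_def)

lemma T_add: "x \<in> G \<Longrightarrow> y \<in> G \<Longrightarrow> \<omega> \<in> space M \<Longrightarrow> T (x + y) \<omega> = T x (T y \<omega>)"
  using ergodic by (simp add: ergodic_system_def)

lemma T_space: "x \<in> G \<Longrightarrow> \<omega> \<in> space M \<Longrightarrow> T x \<omega> \<in> space M"
  using measurable_space[OF T_measurable] .

lemma invariant_event_trivial:
  "A \<in> sets M \<Longrightarrow> (\<And>z. z \<in> G \<Longrightarrow> T z -` A \<inter> space M = A) \<Longrightarrow> prob A = 0 \<or> prob A = 1"
  using ergodic by (simp add: ergodic_system_def)

lemma T_measure_preserving: "x \<in> G \<Longrightarrow> measure_preserving_map M (T x)"
  using ergodic by unfold_locales (auto simp: ergodic_system_def)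

lemma integrable_T: "x \<in> G \<Longrightarrow> integrable M \<psi> \<Longrightarrow> integrable M (\<lambda>\<omega>. \<psi> (T x \<omega>))"
  for \<psi> :: "'a \<Rightarrow> real"
  using measure_preserving_map.integrable_comp_map[OF T_measure_preserving] .

lemma integral_T: "x \<in> G \<Longrightarrow> \<psi> \<in> borel_measurable M \<Longrightarrow> (\<integral>\<omega>. \<psi> (T x \<omega>) \<partial>M) = integral\<^sup>L M \<psi>"
  for \<psi> :: "'a \<Rightarrow> real"
  using measure_preserving_map.integral_comp_map[OF T_measure_preserving] .

lemma AE_T: "x \<in> G \<Longrightarrow> (AE \<omega> in M. P \<omega>) \<Longrightarrow> AE \<omega> in M. P (T x \<omega>)"
  using measure_preserving_map.AE_comp_map[OF T_measure_preserving] .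

lemma countable_G: "countable G"
  by (rule countable_subset[OF subset_UNIV]) simp

lemma Inter_translates_invariant:
  assumes z: "z \<in> G"
  shows "T z -` (\<Inter>x\<in>G. T x -` A \<inter> space M) \<inter> space M = (\<Inter>x\<in>G. T x -` A \<inter> space M)"
proof (intro set_eqI iffI)
  fix \<omega> assume "\<omega> \<in> T z -` (\<Inter>x\<in>G. T x -` A \<inter> space M) \<inter> space M"
  then have \<omega>: "\<omega> \<in> space M" and shifted: "\<And>x. x \<in> G \<Longrightarrow> T x (T z \<omega>) \<in> A"
    by blast+
  show "\<omega> \<in> (\<Inter>x\<in>G. T x -` A \<inter> space M)"
  proof (intro INT_I IntI vimageI2 \<omega>)
    fix y assume y: "y \<in> G"
    have "T y \<omega> = T (y - z) (T z \<omega>)"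
      using T_add[OF gen_group_diff[OF y z] z \<omega>] by simp
    then show "T y \<omega> \<in> A" using shifted[OF gen_group_diff[OF y z]] by simp
  qed
next
  fix \<omega> assume "\<omega> \<in> (\<Inter>x\<in>G. T x -` A \<inter> space M)"
  then have \<omega>: "\<omega> \<in> space M" and orbit: "\<And>x. x \<in> G \<Longrightarrow> T x \<omega> \<in> A"
    using gen_zero[of R] by blast+
  have "T z \<omega> \<in> (\<Inter>x\<in>G. T x -` A \<inter> space M)"
  proof (intro INT_I IntI vimageI2 T_space[OF z \<omega>])
    fix x assume x: "x \<in> G"
    show "T x (T z \<omega>) \<in> A" using orbit[OF gen_add[OF x z]] T_add[OF x z \<omega>] by simp
  qed
  then show "\<omega> \<in> T z -` (\<Inter>x\<in>G. T x -` A \<inter> space M) \<inter> space M" using \<omega> by simp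
qed

text \<open>Ergodicity survives the passage to events that are invariant only up to null sets, since
  the intersection of all translates of such an event is strictly invariant and a.e. equal to it.\<close>
lemma AE_invariant_event_trivial:
  assumes A: "A \<in> sets M" and inv: "\<And>x. x \<in> G \<Longrightarrow> AE \<omega> in M. T x \<omega> \<in> A \<longleftrightarrow> \<omega> \<in> A"
  shows "prob A = 0 \<or> prob A = 1"
proof -
  define A' where "A' = (\<Inter>x\<in>G. T x -` A \<inter> space M)"
  have A'_sets: "A' \<in> sets M"
    unfolding A'_def using measurable_sets[OF T_measurable A] countable_G gen_zero[of R]
    by (intro sets.countable_INT') auto
  have "AE \<omega> in M. \<forall>x\<in>G. T x \<omega> \<in> A \<longleftrightarrow> \<omega> \<in> A"
    using inv countable_G by (simp add: AE_ball_countable)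
  then have "AE \<omega> in M. \<omega> \<in> A \<longleftrightarrow> \<omega> \<in> A'"
    using AE_space by eventually_elim (use T_zero gen_zero[of R] in \<open>auto simp: A'_def\<close>)
  then have "prob A = prob A'"
    by (rule measure_eq_AE[OF _ A A'_sets])
  then show ?thesis
    using invariant_event_trivial[OF A'_sets] Inter_translates_invariant by (simp add: A'_def)
qed

lemma eta_closed_form:
  assumes w: "set w \<subseteq> R" and p: "set p \<subseteq> R" and \<omega>: "\<omega> \<in> space M"
  shows "i \<le> length p \<Longrightarrow>
    eta T (\<omega>, w) p i = (T (sum_list (take i (w @ p))) \<omega>, take (length w) (drop i (w @ p)))"
proof (induction i)
  case 0
  then show ?case using \<omega> by (simp add: T_zero)
next
  case (Suc i)
  then have i: "i < length p" by simp
  have wp: "set (w @ p) \<subseteq> R" using w p by simp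
  have step: "(w @ p) ! i \<in> R" using i by (intro subsetD[OF wp] nth_mem) simp
  have prefix: "sum_list (take i (w @ p)) \<in> G"
    using wp set_take_subset[of i "w @ p"] by (intro gen_group_sum_list) blast
  have "take (Suc i) (w @ p) = take i (w @ p) @ [(w @ p) ! i]"
    using i by (intro take_Suc_conv_app_nth) simp
  then have "sum_list (take (Suc i) (w @ p)) = (w @ p) ! i + sum_list (take i (w @ p))"
    by (simp del: take_append add: add.commute)
  then have position:
    "T (sum_list (take (Suc i) (w @ p))) \<omega> = T ((w @ p) ! i) (T (sum_list (take i (w @ p))) \<omega>)"
    using T_add[OF gen_base[OF step] prefix \<omega>] by simp
  show ?case
  proof (cases w)
    case Nil
    then show ?thesis using Suc position by simp
  next
    case (Cons w1 ws)
    have drop_i: "drop i (w @ p) = (w @ p) ! i # drop (Suc i) (w @ p)"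
      using i by (intro Cons_nth_drop_Suc[symmetric]) simp
    have "drop (Suc i) (w @ p) ! length ws = (w @ p) ! (Suc i + length ws)"
      using i Cons by (intro nth_drop) simp
    also have "\<dots> = p ! i"
      using Cons by (simp add: nth_append)
    finally have "drop (Suc i) (w @ p) ! length ws = p ! i" .
    then have "take (length w) (drop (Suc i) (w @ p)) = take (length ws) (drop (Suc i) (w @ p)) @ [p ! i]"
      using i Cons take_Suc_conv_app_nth[of "length ws" "drop (Suc i) (w @ p)"] by simp
    then show ?thesis using Suc position Cons drop_i by simp
  qed
qed

lemma eta_end:
  assumes w: "set w \<subseteq> R" and p: "set p \<subseteq> R" and \<omega>: "\<omega> \<in> space M" and len: "length w \<le> length p"
  shows "eta T (\<omega>, w) p (length p) =
    (T (sum_list w + sum_list (take (length p - length w) p)) \<omega>, drop (length p - length w) p)"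
  using eta_closed_form[OF w p \<omega>, of "length p"] len by simp

lemma integral_le_truncation_plus_excess:
  fixes h :: "'a \<Rightarrow> real" and \<Phi> :: "'a \<Rightarrow> real" and x :: "nat \<Rightarrow> int ^ 'd"
  assumes \<Phi>: "integrable M \<Phi>" and x: "\<And>i. x i \<in> G" and K: "0 \<le> K"
    and h: "integrable M h"
    and h_le: "\<And>\<omega>. \<omega> \<in> space M \<Longrightarrow> h \<omega> \<le> (\<Sum>i<n. \<Phi> (T (x i) \<omega>)) / real n"
  shows "integral\<^sup>L M h \<le> (\<integral>\<omega>. min (h \<omega>) K \<partial>M) + (\<integral>\<omega>. max (\<Phi> \<omega> - K) 0 \<partial>M)"
proof -
  define excess where "excess \<omega> = max (\<Phi> \<omega> - K) 0" for \<omega>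
  define D where "D \<omega> = (\<Sum>i<n. excess (T (x i) \<omega>)) / real n" for \<omega>
  have excess_int: "integrable M excess"
    unfolding excess_def using \<Phi> by (intro integrable_max Bochner_Integration.integrable_diff) auto
  have D_int: "integrable M D"
    unfolding D_def using excess_int
    by (intro integrable_divide Bochner_Integration.integrable_sum integrable_T x)
  have min_int: "integrable M (\<lambda>\<omega>. min (h \<omega>) K)"
    using h by (intro integrable_min) auto
  have "h \<omega> \<le> min (h \<omega>) K + D \<omega>" if \<omega>: "\<omega> \<in> space M" for \<omega>
  proof -
    have "h \<omega> - K \<le> (\<Sum>i<n. \<Phi> (T (x i) \<omega>) - K) / real n"
      using h_le[OF \<omega>] K by (cases "n = 0") (auto simp: sum_subtractf field_simps)
    also have "\<dots> \<le> D \<omega>"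
      unfolding D_def excess_def by (intro divide_right_mono sum_mono) auto
    finally show ?thesis
      using D_def excess_def by (simp add: min_def sum_nonneg)
  qed
  then have "integral\<^sup>L M h \<le> (\<integral>\<omega>. min (h \<omega>) K \<partial>M) + integral\<^sup>L M D"
    using integral_mono[OF h Bochner_Integration.integrable_add[OF min_int D_int]] min_int D_int
    by simp
  also have "integral\<^sup>L M D = real n * integral\<^sup>L M excess / real n"
    unfolding D_def using excess_int x
    by (simp add: Bochner_Integration.integral_sum integrable_T integral_T
        borel_measurable_integrable)
  also have "\<dots> \<le> integral\<^sup>L M excess"
    by (cases "n = 0") (auto simp: excess_def)
  finally show ?thesis by (simp add: excess_def[abs_def])
qed

text \<open>Averages of translates of one integrable function are uniformly integrable.\<close>
lemma integral_tendsto_0_of_translate_average_bound: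
  fixes h :: "nat \<Rightarrow> 'a \<Rightarrow> real" and \<Phi> :: "'a \<Rightarrow> real" and x :: "nat \<Rightarrow> nat \<Rightarrow> int ^ 'd"
  assumes \<Phi>: "integrable M \<Phi>" "\<And>\<omega>. 0 \<le> \<Phi> \<omega>" and x: "\<And>n i. x n i \<in> G"
    and h_int: "\<And>n. integrable M (h n)" and h_nonneg: "\<And>n \<omega>. 0 \<le> h n \<omega>"
    and h_le: "\<And>n \<omega>. \<omega> \<in> space M \<Longrightarrow> h n \<omega> \<le> (\<Sum>i<n. \<Phi> (T (x n i) \<omega>)) / real n"
    and h_ae: "AE \<omega> in M. (\<lambda>n. h n \<omega>) \<longlonglongrightarrow> 0"
  shows "(\<lambda>n. integral\<^sup>L M (h n)) \<longlonglongrightarrow> 0"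
proof -
  have excess: "(\<lambda>m. \<integral>\<omega>. max (\<Phi> \<omega> - real m) 0 \<partial>M) \<longlonglongrightarrow> (\<integral>\<omega>. 0 \<partial>M)"
  proof (rule integral_dominated_convergence[where w = \<Phi>])
    show "AE \<omega> in M. (\<lambda>m. max (\<Phi> \<omega> - real m) 0) \<longlonglongrightarrow> 0"
    proof (intro AE_I2 tendsto_eventually)
      fix \<omega>
      obtain N :: nat where N: "\<Phi> \<omega> \<le> real N" using real_arch_simple by blast
      show "eventually (\<lambda>m. max (\<Phi> \<omega> - real m) 0 = 0) sequentially"
        using eventually_ge_at_top[of N] by (rule eventually_mono) (use N in simp)
    qed
  qed (use \<Phi> in \<open>auto simp: borel_measurable_integrable\<close>)
  have truncated: "(\<lambda>n. \<integral>\<omega>. min (h n \<omega>) (real m) \<partial>M) \<longlonglongrightarrow> (\<integral>\<omega>. min 0 (real m) \<partial>M)" for m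
  proof (rule integral_dominated_convergence[where w = "\<lambda>\<omega>. real m"])
    show "AE \<omega> in M. (\<lambda>n. min (h n \<omega>) (real m)) \<longlonglongrightarrow> min 0 (real m)"
      using h_ae by eventually_elim (intro tendsto_min tendsto_const)
  qed (use h_int h_nonneg in \<open>auto simp: borel_measurable_integrable\<close>)
  show ?thesis
  proof (rule order_tendstoI)
    fix a :: real assume "a < 0"
    then show "eventually (\<lambda>n. a < integral\<^sup>L M (h n)) sequentially"
      using h_nonneg integral_nonneg_AE[of "h n" M for n]
      by (intro always_eventually allI) (meson AE_I2 less_le_trans)
  next
    fix a :: real assume a: "0 < a"
    obtain m where m: "(\<integral>\<omega>. max (\<Phi> \<omega> - real m) 0 \<partial>M) < a / 2"
      using order_tendstoD(2)[OF excess, of "a / 2"] a by (auto dest: eventually_happens)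
    have "eventually (\<lambda>n. (\<integral>\<omega>. min (h n \<omega>) (real m) \<partial>M) < a / 2) sequentially"
      using a by (intro order_tendstoD(2)[OF truncated]) auto
    then show "eventually (\<lambda>n. integral\<^sup>L M (h n) < a) sequentially"
    proof eventually_elim
      case (elim n)
      then show ?case
        using integral_le_truncation_plus_excess[OF \<Phi>(1) x _ h_int h_le, of "real m" n] m by simp
    qed
  qed
qed

definition AE_invariant :: "('a \<Rightarrow> 'b) \<Rightarrow> int ^ 'd \<Rightarrow> bool" where
  "AE_invariant g x \<longleftrightarrow> x \<in> G \<and> (AE \<omega> in M. g (T x \<omega>) = g \<omega>)"

lemma AE_invariant_zero: "AE_invariant g 0"
  unfolding AE_invariant_def using gen_zero[of R] T_zero by (auto intro: AE_I2)

lemma AE_invariant_add: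
  assumes x: "AE_invariant g x" and y: "AE_invariant g y"
  shows "AE_invariant g (x + y)"
proof -
  have "AE \<omega> in M. g (T x (T y \<omega>)) = g (T y \<omega>)"
    using AE_T[of y "\<lambda>\<omega>. g (T x \<omega>) = g \<omega>"] x y by (simp add: AE_invariant_def)
  moreover have "AE \<omega> in M. g (T y \<omega>) = g \<omega>"
    using y by (simp add: AE_invariant_def)
  ultimately have "AE \<omega> in M. g (T (x + y) \<omega>) = g \<omega>"
    using AE_space by eventually_elim (use x y T_add in \<open>auto simp: AE_invariant_def\<close>)
  then show ?thesis using x y gen_add by (auto simp: AE_invariant_def)
qed

lemma AE_invariant_uminus:
  assumes x: "AE_invariant g x"
  shows "AE_invariant g (- x)"
proof -
  have xG: "x \<in> G" and "-x \<in> G" using x gen_neg by (auto simp: AE_invariant_def)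
  then have "AE \<omega> in M. g (T x (T (- x) \<omega>)) = g (T (- x) \<omega>)"
    using AE_T[of "- x" "\<lambda>\<omega>. g (T x \<omega>) = g \<omega>"] x by (simp add: AE_invariant_def)
  moreover have "T x (T (- x) \<omega>) = \<omega>" if "\<omega> \<in> space M" for \<omega>
    using T_add[OF xG \<open>-x \<in> G\<close> that] T_zero[OF that] by simp
  ultimately have "AE \<omega> in M. g (T (- x) \<omega>) = g \<omega>"
    by (auto elim: AE_mp intro: AE_I2)
  then show ?thesis using \<open>-x \<in> G\<close> by (simp add: AE_invariant_def)
qed

lemma AE_invariant_of_nat_mult: "AE_invariant g x \<Longrightarrow> AE_invariant g (of_nat k * x)"
  by (induction k) (auto simp: distrib_right AE_invariant_zero intro: AE_invariant_add)

lemma AE_invariant_gen_group: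
  assumes "x \<in> G" and "\<And>z. z \<in> R \<Longrightarrow> AE_invariant g z"
  shows "AE_invariant g x"
  using assms(1)
  by (induction rule: gen_group.induct) (auto intro: assms(2) AE_invariant_zero AE_invariant_add AE_invariant_uminus)

end

section \<open>Functions of class K\<close>

locale classK_function = lattice_action M R T
  for M :: "'a measure" and R :: "(int ^ 'd) set" and T +
  fixes l :: nat and F :: "'a \<times> (int ^ 'd) list \<Rightarrow> int ^ 'd \<Rightarrow> real"
  assumes finite_R: "finite R" and classK: "classK M R T l F"
begin

definition "states = {w. set w \<subseteq> R \<and> length w = l}"

lemma finite_states: "finite states"
  unfolding states_def using finite_lists_length_eq[OF finite_R] by simp

lemma classK_integrable: "w \<in> states \<Longrightarrow> z \<in> R \<Longrightarrow> integrable M (\<lambda>\<omega>. F (\<omega>, w) z)"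
  using classK unfolding classK_def states_def by blast

lemma classK_mean_zero:
  "l \<le> length a \<Longrightarrow> set a \<subseteq> R \<Longrightarrow> (\<integral>\<omega>. path_sum T F (\<omega>, drop (length a - l) a) a \<partial>M) = 0"
  using classK unfolding classK_def by blast

definition path_independent :: "'a \<Rightarrow> bool" where
  "path_independent \<omega> \<longleftrightarrow> (\<forall>w a a'. w \<in> states \<and> set a \<subseteq> R \<and> set a' \<subseteq> R \<and>
     eta T (\<omega>, w) a (length a) = eta T (\<omega>, w) a' (length a') \<longrightarrow>
     path_sum T F (\<omega>, w) a = path_sum T F (\<omega>, w) a')"

lemma AE_path_independent: "AE \<omega> in M. path_independent \<omega>"
  using classK unfolding classK_def path_independent_def states_def by auto

lemma path_independentD:
  "path_independent \<omega> \<Longrightarrow> w \<in> states \<Longrightarrow> set a \<subseteq> R \<Longrightarrow> set a' \<subseteq> R \<Longrightarrow>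
    eta T (\<omega>, w) a (length a) = eta T (\<omega>, w) a' (length a') \<Longrightarrow>
    path_sum T F (\<omega>, w) a = path_sum T F (\<omega>, w) a'"
  unfolding path_independent_def by blast

definition "envelope \<omega> = (\<Sum>w\<in>states. \<Sum>z\<in>R. \<bar>F (\<omega>, w) z\<bar>)"

lemma envelope_nonneg: "0 \<le> envelope \<omega>"
  unfolding envelope_def by (intro sum_nonneg) auto

lemma integrable_envelope: "integrable M envelope"
  unfolding envelope_def
  by (intro Bochner_Integration.integrable_sum integrable_abs classK_integrable)

lemma abs_F_le_envelope: "w \<in> states \<Longrightarrow> z \<in> R \<Longrightarrow> \<bar>F (\<omega>, w) z\<bar> \<le> envelope \<omega>"
  unfolding envelope_def using finite_R finite_states
  by (intro order_trans[OF member_le_sum[of z R] member_le_sum[of w states]])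
    (auto intro: sum_nonneg)

lemma state_on_path:
  assumes "w \<in> states" "set p \<subseteq> R" "i \<le> length p"
  shows "take l (drop i (w @ p)) \<in> states"
proof -
  have "set (take l (drop i (w @ p))) \<subseteq> set (w @ p)"
    by (meson order_trans set_drop_subset set_take_subset)
  then show ?thesis using assms by (auto simp: states_def)
qed

lemma path_sum_closed_form:
  assumes w: "w \<in> states" and p: "set p \<subseteq> R" and \<omega>: "\<omega> \<in> space M"
  shows "path_sum T F (\<omega>, w) p =
    (\<Sum>i<length p. F (T (sum_list (take i (w @ p))) \<omega>, take l (drop i (w @ p))) (p ! i))"
  unfolding path_sum_def using w eta_closed_form[OF _ p \<omega>] by (intro sum.cong) (auto simp: states_def)

lemma sum_list_take_in_G: "w \<in> states \<Longrightarrow> set p \<subseteq> R \<Longrightarrow> sum_list (take i (w @ p)) \<in> G"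
  using set_take_subset[of i "w @ p"] by (intro gen_group_sum_list) (auto simp: states_def)

lemma abs_path_sum_le:
  assumes w: "w \<in> states" and p: "set p \<subseteq> R" and \<omega>: "\<omega> \<in> space M"
  shows "\<bar>path_sum T F (\<omega>, w) p\<bar> \<le> (\<Sum>i<length p. envelope (T (sum_list (take i (w @ p))) \<omega>))"
  unfolding path_sum_closed_form[OF assms]
  using w p by (intro order_trans[OF sum_abs] sum_mono abs_F_le_envelope state_on_path) auto

lemma integrable_path_sum:
  assumes w: "w \<in> states" and p: "set p \<subseteq> R"
  shows "integrable M (\<lambda>\<omega>. path_sum T F (\<omega>, w) p)"
proof -
  have "integrable M (\<lambda>\<omega>. \<Sum>i<length p. F (T (sum_list (take i (w @ p))) \<omega>, take l (drop i (w @ p))) (p ! i))"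
    using w p by (intro Bochner_Integration.integrable_sum integrable_T[OF sum_list_take_in_G]
        classK_integrable state_on_path) auto
  then show ?thesis
    by (rule Bochner_Integration.integrable_cong[THEN iffD1, rotated 2])
      (simp_all add: path_sum_closed_form[OF w p])
qed

lemma path_sum_measurable [measurable]:
  "w \<in> states \<Longrightarrow> set p \<subseteq> R \<Longrightarrow> (\<lambda>\<omega>. path_sum T F (\<omega>, w) p) \<in> borel_measurable M"
  using integrable_path_sum by (rule borel_measurable_integrable)

definition "displacements K = sum_list ` {q. set q \<subseteq> R \<and> length q \<le> K}"

definition "local_envelope K \<omega> = (\<Sum>y\<in>displacements K. envelope (T y \<omega>))"

lemma finite_displacements: "finite (displacements K)"
  unfolding displacements_def using finite_lists_length_le[OF finite_R] by simp

lemma displacements_in_G: "y \<in> displacements K \<Longrightarrow> y \<in> G"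
  unfolding displacements_def using gen_group_sum_list by auto

lemma local_envelope_nonneg: "0 \<le> local_envelope K \<omega>"
  unfolding local_envelope_def by (intro sum_nonneg envelope_nonneg)

lemma integrable_local_envelope: "integrable M (local_envelope K)"
  unfolding local_envelope_def
  by (intro Bochner_Integration.integrable_sum integrable_T[OF displacements_in_G integrable_envelope])

text \<open>A path of bounded length only visits the finitely many translates counted in the local envelope.\<close>
lemma abs_path_sum_le_local_envelope:
  assumes w: "w \<in> states" and p: "set p \<subseteq> R" and \<omega>: "\<omega> \<in> space M" and K: "l + length p \<le> K"
  shows "\<bar>path_sum T F (\<omega>, w) p\<bar> \<le> real (length p) * local_envelope K \<omega>"
proof -
  have "sum_list (take i (w @ p)) \<in> displacements K" for i
    using w p K set_take_subset[of i "w @ p"] unfolding displacements_def states_def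
    by (intro imageI) auto
  then have "envelope (T (sum_list (take i (w @ p))) \<omega>) \<le> local_envelope K \<omega>" for i
    unfolding local_envelope_def using finite_displacements envelope_nonneg
    by (intro member_le_sum) auto
  then have "(\<Sum>i<length p. envelope (T (sum_list (take i (w @ p))) \<omega>)) \<le> (\<Sum>i<length p. local_envelope K \<omega>)"
    by (intro sum_mono)
  then show ?thesis
    using abs_path_sum_le[OF w p \<omega>] by simp
qed

end

section \<open>Birkhoff averages along a periodic path\<close>

locale periodic_block = classK_function M R T l F
  for M :: "'a measure" and R :: "(int ^ 'd) set" and T l F +
  fixes b :: nat and c :: "(int ^ 'd) list"
  assumes b_pos: "1 \<le> b" and length_c [simp]: "length c = b" and set_c: "set c \<subseteq> R"
begin

definition "v = sum_list c"

lemma v_in_G: "v \<in> G"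
  unfolding v_def by (rule gen_group_sum_list[OF set_c])

sublocale shift: measure_preserving_map M "T v"
  by (rule T_measure_preserving[OF v_in_G])

lemma set_list_pow_c: "set (list_pow c k) \<subseteq> R"
  by (rule order_trans[OF set_list_pow set_c])

lemma sum_list_pow_c: "sum_list (list_pow c k) = of_nat k * v"
  unfolding v_def by (rule sum_list_pow)

text \<open>The state reached after running periodically through \<open>c\<close> for at least \<open>l\<close> steps.\<close>
definition "block_state = drop (l * b - l) (list_pow c l)"

definition "phi \<omega> = path_sum T F (\<omega>, block_state) c"

definition "block_sum = birkhoff_sum (T v) phi"

definition "block_avg k \<omega> = block_sum k \<omega> / real k"

lemma l_le_l_mult_b: "l \<le> l * b"
  using b_pos by simp

lemma block_state_in_states: "block_state \<in> states"
  unfolding block_state_def states_def using l_le_l_mult_b set_list_pow_c[of l] set_drop_subset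
  by fastforce

lemma drop_append_list_pow: "drop (length (q @ list_pow c l) - l) (q @ list_pow c l) = block_state"
proof -
  have "length (q @ list_pow c l) - l = length q + (l * b - l)"
    using l_le_l_mult_b by simp
  then show ?thesis unfolding block_state_def by simp
qed

lemma drop_list_pow: "l \<le> k \<Longrightarrow> drop (length (list_pow c k) - l) (list_pow c k) = block_state"
  using drop_append_list_pow[of "list_pow c (k - l)"] list_pow_add[of c "k - l" l] by simp

lemma drop_block_state_c: "drop b (block_state @ c) = block_state"
proof -
  have "block_state @ c = drop (l * b - l) (list_pow c (Suc l))"
    unfolding block_state_def list_pow_Suc_right using l_le_l_mult_b by simp
  then have "drop b (block_state @ c) = drop (length (list_pow c (Suc l)) - l) (list_pow c (Suc l))"
    using l_le_l_mult_b by (simp add: add.commute)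
  also have "\<dots> = block_state" by (rule drop_list_pow) simp
  finally show ?thesis .
qed

lemma eta_block: "\<omega> \<in> space M \<Longrightarrow> eta T (\<omega>, block_state) c b = (T v \<omega>, block_state)"
proof -
  assume \<omega>: "\<omega> \<in> space M"
  have "sum_list (take b (block_state @ c)) + sum_list block_state = sum_list block_state + v"
    using sum_list_take_drop[of b "block_state @ c"] unfolding drop_block_state_c v_def by simp
  then have "sum_list (take b (block_state @ c)) = v" by simp
  then show ?thesis
    using eta_closed_form[OF _ set_c \<omega>, of block_state b] block_state_in_states drop_block_state_c
    by (simp add: states_def)
qed

lemma eta_path_sum_list_pow:
  assumes \<omega>: "\<omega> \<in> space M"
  shows "eta T (\<omega>, block_state) (list_pow c k) (k * b) = ((T v ^^ k) \<omega>, block_state)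
    \<and> path_sum T F (\<omega>, block_state) (list_pow c k) = block_sum k \<omega>"
proof (induction k)
  case 0
  then show ?case by (simp add: block_sum_def path_sum_def)
next
  case (Suc k)
  have "eta T (\<omega>, block_state) (list_pow c (Suc k)) (Suc k * b)
      = eta T ((T v ^^ k) \<omega>, block_state) c b"
    using Suc eta_end_append[of T "(\<omega>, block_state)" "list_pow c k" c]
    by (simp add: list_pow_Suc_right add.commute)
  then show ?case
    using Suc eta_block[OF shift.funpow_space[OF \<omega>]]
    by (simp add: list_pow_Suc_right path_sum_append block_sum_def birkhoff_sum_def phi_def)
qed

lemma eta_list_pow:
  "\<omega> \<in> space M \<Longrightarrow> eta T (\<omega>, block_state) (list_pow c k) (k * b) = ((T v ^^ k) \<omega>, block_state)"
  using eta_path_sum_list_pow by blast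

lemma path_sum_list_pow:
  "\<omega> \<in> space M \<Longrightarrow> path_sum T F (\<omega>, block_state) (list_pow c k) = block_sum k \<omega>"
  using eta_path_sum_list_pow by blast

lemma integrable_phi: "integrable M phi"
  unfolding phi_def by (rule integrable_path_sum[OF block_state_in_states set_c])

lemma integrable_block_sum: "integrable M (block_sum k)"
  unfolding block_sum_def by (rule shift.integrable_birkhoff_sum[OF integrable_phi])

lemma block_sum_measurable [measurable]: "block_sum k \<in> borel_measurable M"
  using integrable_block_sum by (rule borel_measurable_integrable)

lemma block_avg_measurable [measurable]: "block_avg k \<in> borel_measurable M"
  unfolding block_avg_def by measurable

text \<open>Property (ii) of the class, applied to \<open>l + 1\<close> periods of \<open>c\<close>, together with stationarity.\<close>
lemma phi_mean_zero: "integral\<^sup>L M phi = 0"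
proof -
  let ?a = "list_pow c (Suc l)"
  have "(\<integral>\<omega>. path_sum T F (\<omega>, block_state) ?a \<partial>M) = 0"
    using classK_mean_zero[of ?a] drop_list_pow[of "Suc l"] set_list_pow_c l_le_l_mult_b by simp
  moreover have "(\<integral>\<omega>. path_sum T F (\<omega>, block_state) ?a \<partial>M) = integral\<^sup>L M (block_sum (Suc l))"
    using path_sum_list_pow by (intro Bochner_Integration.integral_cong) auto
  moreover have "integral\<^sup>L M (block_sum (Suc l)) = real (Suc l) * integral\<^sup>L M phi"
    unfolding block_sum_def birkhoff_sum_def[abs_def]
    using shift.integrable_funpow[OF integrable_phi]
    by (simp add: Bochner_Integration.integral_sum shift.integral_funpow
        borel_measurable_integrable[OF integrable_phi] ring_distribs)
  ultimately show ?thesis by simp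
qed

text \<open>Averages are clipped to \<open>[0, 1]\<close> so that the shift by one period changes them by \<open>O(1/k)\<close>.\<close>
definition "upper_avg \<omega> = limsup (\<lambda>k. ereal (clip01 (block_avg k \<omega>)))"

lemma upper_avg_measurable [measurable]: "upper_avg \<in> borel_measurable M"
  unfolding upper_avg_def clip01_def by measurable

lemma block_avg_T_v:
  assumes "1 \<le> k"
  shows "block_avg k (T v \<omega>) = (1 + 1 / real k) * block_avg (Suc k) \<omega> - phi \<omega> / real k"
proof -
  have "block_avg k (T v \<omega>) = (block_sum (Suc k) \<omega> - phi \<omega>) / real k"
    by (simp add: block_avg_def block_sum_def birkhoff_sum_Suc)
  also have "\<dots> = (1 + 1 / real k) * block_avg (Suc k) \<omega> - phi \<omega> / real k"
    using assms by (simp add: block_avg_def field_simps del: of_nat_Suc) (simp add: algebra_simps)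
  finally show ?thesis .
qed

lemma upper_avg_T_v: "upper_avg (T v \<omega>) = upper_avg \<omega>"
proof -
  let ?d = "\<lambda>k. clip01 (block_avg k (T v \<omega>)) - clip01 (block_avg (Suc k) \<omega>)"
  have bound: "\<bar>?d k\<bar> \<le> (\<bar>phi \<omega>\<bar> + 1) / real k" if k: "1 \<le> k" for k
  proof -
    let ?a = "block_avg (Suc k) \<omega>"
    have "\<bar>clip01 (block_avg k (T v \<omega>)) - clip01 ((1 + 1 / real k) * ?a)\<bar> \<le> \<bar>phi \<omega>\<bar> / real k"
      using clip01_lipschitz[of "block_avg k (T v \<omega>)" "(1 + 1 / real k) * ?a"]
      unfolding block_avg_T_v[OF k] by simp
    moreover have "\<bar>clip01 ((1 + 1 / real k) * ?a) - clip01 ?a\<bar> \<le> 1 / real k"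
      by (rule clip01_scale) simp
    ultimately show ?thesis by (simp add: add_divide_distrib)
  qed
  have "eventually (\<lambda>k. norm (?d k) \<le> (\<bar>phi \<omega>\<bar> + 1) / real k) sequentially"
    using eventually_ge_at_top[of 1] by (rule eventually_mono) (simp add: bound)
  then have "?d \<longlonglongrightarrow> 0"
    using tendsto_const_div_real by (rule Lim_null_comparison)
  then have "upper_avg (T v \<omega>) = limsup (\<lambda>k. ereal (clip01 (block_avg (Suc k) \<omega>)))"
    unfolding upper_avg_def by (rule limsup_ereal_eq_of_diff_tendsto_0)
  also have "\<dots> = upper_avg \<omega>"
    unfolding upper_avg_def using limsup_shift[of "\<lambda>k. ereal (clip01 (block_avg k \<omega>))"] by simp
  finally show ?thesis .
qed

lemma eta_end_append_list_pow:
  assumes q: "set q \<subseteq> R" and \<omega>: "\<omega> \<in> space M"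
  shows "eta T (\<omega>, block_state) (q @ list_pow c l) (length (q @ list_pow c l))
    = (T (sum_list q + of_nat l * v) \<omega>, block_state)"
proof -
  let ?p = "q @ list_pow c l"
  have p: "set ?p \<subseteq> R" using q set_list_pow_c by auto
  have length_p: "l \<le> length ?p" using l_le_l_mult_b by (simp add: trans_le_add2)
  have "sum_list (take (length ?p - l) ?p) + sum_list block_state = sum_list ?p"
    using sum_list_take_drop[of "length ?p - l" ?p] unfolding drop_append_list_pow .
  then have "sum_list block_state + sum_list (take (length ?p - l) ?p) = sum_list q + of_nat l * v"
    by (metis add.commute sum_list_append sum_list_pow_c)
  then show ?thesis
    using eta_end[OF _ p \<omega>, of block_state] block_state_in_states drop_append_list_pow length_p
    by (simp add: states_def)
qed

text \<open>Path independence lets the extra step \<open>z\<close> be taken either before or after \<open>k\<close> periods: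
  \<open>c\<^sup>k z c\<^sup>l\<close> and \<open>z c\<^sup>l c\<^sup>k\<close> have the same endpoint.\<close>
lemma block_sum_T_translate:
  assumes z: "z \<in> R" and \<omega>: "\<omega> \<in> space M" and indep: "path_independent \<omega>"
  defines "P \<equiv> z # list_pow c l"
  shows "block_sum k (T (z + of_nat l * v) \<omega>)
    = block_sum k \<omega> + path_sum T F ((T v ^^ k) \<omega>, block_state) P - path_sum T F (\<omega>, block_state) P"
proof -
  have P: "set P \<subseteq> R" using z set_list_pow_c by (auto simp: P_def)
  have zv: "z + of_nat l * v \<in> G" using gen_add[OF gen_base[OF z] gen_group_of_nat_mult[OF v_in_G]] .
  have "set (list_pow c k @ [z]) \<subseteq> R" "set ([z] @ list_pow c k) \<subseteq> R"
    using z set_list_pow_c[of k] by auto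
  then have "eta T (\<omega>, block_state) ((list_pow c k @ [z]) @ list_pow c l) (length ((list_pow c k @ [z]) @ list_pow c l))
      = eta T (\<omega>, block_state) (([z] @ list_pow c k) @ list_pow c l) (length (([z] @ list_pow c k) @ list_pow c l))"
    by (simp only: eta_end_append_list_pow[OF _ \<omega>]) (simp add: add.commute)
  moreover have "([z] @ list_pow c k) @ list_pow c l = P @ list_pow c k"
    using list_pow_add[of c k l] list_pow_add[of c l k] by (simp add: P_def add.commute)
  moreover have "(list_pow c k @ [z]) @ list_pow c l = list_pow c k @ P"
    by (simp add: P_def)
  ultimately have "eta T (\<omega>, block_state) (list_pow c k @ P) (length (list_pow c k @ P))
      = eta T (\<omega>, block_state) (P @ list_pow c k) (length (P @ list_pow c k))"
    by (simp only:)
  moreover have "set (list_pow c k @ P) \<subseteq> R" "set (P @ list_pow c k) \<subseteq> R"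
    using P set_list_pow_c[of k] by auto
  ultimately have "path_sum T F (\<omega>, block_state) (list_pow c k @ P)
      = path_sum T F (\<omega>, block_state) (P @ list_pow c k)"
    using path_independentD[OF indep block_state_in_states] by blast
  moreover have "path_sum T F (\<omega>, block_state) (list_pow c k @ P)
      = block_sum k \<omega> + path_sum T F ((T v ^^ k) \<omega>, block_state) P"
    unfolding path_sum_append using path_sum_list_pow[OF \<omega>] eta_list_pow[OF \<omega>] by simp
  moreover have "path_sum T F (\<omega>, block_state) (P @ list_pow c k)
      = path_sum T F (\<omega>, block_state) P + block_sum k (T (z + of_nat l * v) \<omega>)"
    unfolding path_sum_append
    using eta_end_append_list_pow[of "[z]", OF _ \<omega>] z path_sum_list_pow[OF T_space[OF zv \<omega>]]
    by (simp add: P_def)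
  ultimately show ?thesis by simp
qed

lemma abs_block_avg_T_translate_le:
  assumes z: "z \<in> R" and \<omega>: "\<omega> \<in> space M" and indep: "path_independent \<omega>"
  shows "\<bar>block_avg k (T (z + of_nat l * v) \<omega>) - block_avg k \<omega>\<bar>
    \<le> \<bar>path_sum T F (\<omega>, block_state) (z # list_pow c l)\<bar> / real k
      + real (Suc (l * b)) * (local_envelope (l * b + l + 1) ((T v ^^ k) \<omega>) / real k)"
proof -
  let ?P = "z # list_pow c l" and ?E = "local_envelope (l * b + l + 1) ((T v ^^ k) \<omega>)"
  have "\<bar>path_sum T F ((T v ^^ k) \<omega>, block_state) ?P\<bar> \<le> real (Suc (l * b)) * ?E"
    using abs_path_sum_le_local_envelope[where p = ?P and K = "l * b + l + 1",
        OF block_state_in_states _ shift.funpow_space[OF \<omega>]] z set_list_pow_c[of l]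
    by simp
  then have "\<bar>block_sum k (T (z + of_nat l * v) \<omega>) - block_sum k \<omega>\<bar>
      \<le> \<bar>path_sum T F (\<omega>, block_state) ?P\<bar> + real (Suc (l * b)) * ?E"
    unfolding block_sum_T_translate[OF z \<omega> indep] by linarith
  then have "\<bar>block_sum k (T (z + of_nat l * v) \<omega>) - block_sum k \<omega>\<bar> / real k
      \<le> (\<bar>path_sum T F (\<omega>, block_state) ?P\<bar> + real (Suc (l * b)) * ?E) / real k"
    by (rule divide_right_mono) simp
  then show ?thesis
    by (simp add: block_avg_def diff_divide_distrib[symmetric] add_divide_distrib)
qed

lemma AE_upper_avg_T_translate:
  assumes z: "z \<in> R"
  shows "AE \<omega> in M. upper_avg (T (z + of_nat l * v) \<omega>) = upper_avg \<omega>"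
proof -
  let ?E = "local_envelope (l * b + l + 1)"
  have "AE \<omega> in M. (\<lambda>k. ?E ((T v ^^ k) \<omega>) / real k) \<longlonglongrightarrow> 0"
    by (rule shift.AE_funpow_div_tendsto_0[OF integrable_local_envelope local_envelope_nonneg])
  with AE_path_independent AE_space show ?thesis
  proof eventually_elim
    case (elim \<omega>)
    define bound where "bound k = \<bar>path_sum T F (\<omega>, block_state) (z # list_pow c l)\<bar> / real k
      + real (Suc (l * b)) * (?E ((T v ^^ k) \<omega>) / real k)" for k
    have "eventually (\<lambda>k. norm (clip01 (block_avg k (T (z + of_nat l * v) \<omega>)) - clip01 (block_avg k \<omega>))
        \<le> bound k) sequentially"
      unfolding bound_def real_norm_def
      using order_trans[OF clip01_lipschitz abs_block_avg_T_translate_le[OF z elim(2,1)]]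
      by (simp add: always_eventually)
    moreover have "bound \<longlonglongrightarrow> 0 + real (Suc (l * b)) * 0"
      unfolding bound_def using elim(3)
      by (intro tendsto_add tendsto_mult tendsto_const tendsto_const_div_real)
    then have "bound \<longlonglongrightarrow> 0" by simp
    ultimately have "(\<lambda>k. clip01 (block_avg k (T (z + of_nat l * v) \<omega>)) - clip01 (block_avg k \<omega>)) \<longlonglongrightarrow> 0"
      by (rule Lim_null_comparison)
    then show ?case
      unfolding upper_avg_def by (rule limsup_ereal_eq_of_diff_tendsto_0)
  qed
qed

lemma AE_invariant_upper_avg: "x \<in> G \<Longrightarrow> AE_invariant upper_avg x"
proof (erule AE_invariant_gen_group)
  fix z assume z: "z \<in> R"
  have v: "AE_invariant upper_avg v"
    using v_in_G upper_avg_T_v by (simp add: AE_invariant_def)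
  have "AE_invariant upper_avg (z + of_nat l * v)"
    using AE_upper_avg_T_translate[OF z] gen_add[OF gen_base[OF z] gen_group_of_nat_mult[OF v_in_G]]
    by (simp add: AE_invariant_def)
  then show "AE_invariant upper_avg z"
    using AE_invariant_add[OF _ AE_invariant_uminus[OF AE_invariant_of_nat_mult[OF v]], of "z + of_nat l * v" l]
    by simp
qed

text \<open>If the upper average exceeded \<open>\<beta> > 0\<close> almost surely, the maximal ergodic lemma for
  \<open>\<phi> - \<beta>\<close> would give \<open>\<integral>\<phi> \<ge> \<beta>\<close>, contradicting \<open>\<integral>\<phi> = 0\<close>.\<close>
lemma prob_upper_avg_greater_ne_1:
  assumes \<beta>: "0 < \<beta>"
  shows "prob {\<omega>\<in>space M. ereal \<beta> < upper_avg \<omega>} \<noteq> 1"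
proof
  assume "prob {\<omega>\<in>space M. ereal \<beta> < upper_avg \<omega>} = 1"
  then have "AE \<omega> in M. \<omega> \<in> {\<omega>\<in>space M. ereal \<beta> < upper_avg \<omega>}"
    by (rule AE_prob_1)
  then have "AE \<omega> in M. \<exists>k. birkhoff_sum (T v) (\<lambda>\<omega>. phi \<omega> - \<beta>) k \<omega> > 0"
  proof (rule eventually_mono)
    fix \<omega> assume "\<omega> \<in> {\<omega>\<in>space M. ereal \<beta> < upper_avg \<omega>}"
    then obtain y where "ereal \<beta> < y" "\<not> eventually (\<lambda>k. ereal (clip01 (block_avg k \<omega>)) < y) sequentially"
      unfolding upper_avg_def by (auto simp: not_le[symmetric] Limsup_le_iff)
    then have "frequently (\<lambda>k. y \<le> ereal (clip01 (block_avg k \<omega>))) sequentially"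
      by (simp add: not_eventually not_less)
    then obtain k where "y \<le> ereal (clip01 (block_avg k \<omega>))"
      by (auto dest: frequently_ex)
    with \<open>ereal \<beta> < y\<close> have "ereal \<beta> < ereal (clip01 (block_avg k \<omega>))"
      by (rule less_le_trans)
    then have "\<beta> < clip01 (block_avg k \<omega>)" by simp
    then have "\<beta> < block_avg k \<omega>" by (rule clip01_less_imp[OF less_imp_le[OF \<beta>]])
    moreover have "k \<noteq> 0"
      using \<open>\<beta> < block_avg k \<omega>\<close> \<beta> by (cases "k = 0") (auto simp: block_avg_def)
    ultimately have "\<beta> * real k < block_sum k \<omega>"
      by (simp add: block_avg_def pos_less_divide_eq)
    then show "\<exists>k. birkhoff_sum (T v) (\<lambda>\<omega>. phi \<omega> - \<beta>) k \<omega> > 0"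
      by (intro exI[of _ k]) (simp add: birkhoff_sum_def sum_subtractf block_sum_def mult.commute)
  qed
  then have "0 \<le> (\<integral>\<omega>. phi \<omega> - \<beta> \<partial>M)"
    using integrable_phi by (intro shift.integral_nonneg_if_AE_birkhoff_sum_pos) auto
  then show False
    using integrable_phi phi_mean_zero \<beta> by (simp add: prob_space)
qed

lemma AE_upper_avg_le:
  assumes \<beta>: "0 < \<beta>"
  shows "AE \<omega> in M. upper_avg \<omega> \<le> ereal \<beta>"
proof -
  let ?E = "{\<omega>\<in>space M. ereal \<beta> < upper_avg \<omega>}"
  have E: "?E \<in> sets M" by measurable
  have "AE \<omega> in M. T x \<omega> \<in> ?E \<longleftrightarrow> \<omega> \<in> ?E" if x: "x \<in> G" for x
  proof -
    have "AE \<omega> in M. upper_avg (T x \<omega>) = upper_avg \<omega>"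
      using AE_invariant_upper_avg[OF x] by (simp add: AE_invariant_def)
    then show ?thesis
      using AE_space by eventually_elim (use T_space[OF x] in auto)
  qed
  then have "prob ?E = 0"
    using AE_invariant_event_trivial[OF E] prob_upper_avg_greater_ne_1[OF \<beta>] by blast
  then have "?E \<in> null_sets M"
    using E by (simp add: emeasure_eq_measure null_sets_def)
  then have "AE \<omega> in M. \<omega> \<notin> ?E"
    by (rule AE_not_in)
  then show ?thesis
    using AE_space by eventually_elim (auto simp: not_less)
qed

lemma AE_block_avg_eventually_less:
  "AE \<omega> in M. \<forall>e>0. eventually (\<lambda>k. block_avg k \<omega> < e) sequentially"
proof -
  have "AE \<omega> in M. \<forall>m. upper_avg \<omega> \<le> ereal (1 / real (Suc m))"
    unfolding AE_all_countable by (intro allI AE_upper_avg_le) simp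
  then show ?thesis
  proof (rule eventually_mono, intro allI impI)
    fix \<omega> and e :: real
    assume le: "\<forall>m. upper_avg \<omega> \<le> ereal (1 / real (Suc m))" and e: "0 < e"
    obtain m where m: "1 / real (Suc m) < min e 1"
      using e by (metis nat_approx_posE min_less_iff_conj zero_less_one)
    then have "ereal (1 / real (Suc m)) < ereal (min e 1)"
      by (simp only: less_ereal.simps)
    then have "upper_avg \<omega> < ereal (min e 1)"
      by (rule le_less_trans[OF le[rule_format]])
    then have "eventually (\<lambda>k. ereal (clip01 (block_avg k \<omega>)) < ereal (min e 1)) sequentially"
      unfolding upper_avg_def by (rule Limsup_lessD)
    then show "eventually (\<lambda>k. block_avg k \<omega> < e) sequentially"
    proof (rule eventually_mono)
      fix k assume "ereal (clip01 (block_avg k \<omega>)) < ereal (min e 1)"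
      then have "clip01 (block_avg k \<omega>) < min e 1" by simp
      then have "block_avg k \<omega> < min e 1" by (rule less_clip01_imp[rotated]) simp
      then show "block_avg k \<omega> < e" by simp
    qed
  qed
qed

lemma AE_block_avg_tendsto_0: "AE \<omega> in M. (\<lambda>k. block_avg k \<omega>) \<longlonglongrightarrow> 0"
proof -
  interpret neg: periodic_block M R T l "\<lambda>e z. - F e z" b c
    using ergodic finite_R classK_uminus[OF classK] b_pos set_c by unfold_locales auto
  have "neg.block_avg k \<omega> = - block_avg k \<omega>" for k \<omega>
    unfolding neg.block_avg_def block_avg_def neg.block_sum_def block_sum_def neg.phi_def phi_def
      neg.block_state_def block_state_def neg.v_def v_def path_sum_uminus birkhoff_sum_def
    by (simp add: sum_negf)
  then have "AE \<omega> in M. \<forall>e>0. eventually (\<lambda>k. - block_avg k \<omega> < e) sequentially"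
    using neg.AE_block_avg_eventually_less by simp
  with AE_block_avg_eventually_less show ?thesis
  proof eventually_elim
    case (elim \<omega>)
    show ?case
    proof (rule order_tendstoI)
      fix a :: real assume "a < 0"
      then show "eventually (\<lambda>k. a < block_avg k \<omega>) sequentially"
        using elim(2)[rule_format, of "- a"] by (auto elim: eventually_mono)
    qed (use elim(1) in auto)
  qed
qed

end

section \<open>Paths in a rational direction\<close>

locale rational_direction = periodic_block M R T l F b c
  for M :: "'a measure" and R :: "(int ^ 'd) set" and T l F b c +
  fixes xhat :: "nat \<Rightarrow> int ^ 'd" and zs zbar :: "(int ^ 'd) list"
  assumes xhat_step: "\<And>n. xhat (Suc n) - xhat n \<in> R"
    and xhat_mult_b: "\<And>j. xhat (j * b) = of_nat j * sum_list c"
    and zs: "set zs \<subseteq> R" "length zs = l" and zbar: "set zbar \<subseteq> R" "length zbar = l"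
begin

lemma zs_state: "zs \<in> states" and zbar_state: "zbar \<in> states"
  using zs zbar by (simp_all add: states_def)

lemma xhat_mult_v: "xhat (j * b) = of_nat j * v"
  unfolding v_def by (rule xhat_mult_b)

abbreviation "paths n \<equiv> An R l xhat n zs zbar"

lemma paths_D:
  assumes "a \<in> paths n"
  shows "length a = n" "set a \<subseteq> R" "sum_list zs + sum_list (take (n - l) a) = xhat n"
    "drop (n - l) a = zbar" "l \<le> n"
proof -
  show "length a = n" "set a \<subseteq> R" "sum_list zs + sum_list (take (n - l) a) = xhat n"
    and drop: "drop (n - l) a = zbar"
    using assms unfolding An_def by auto
  then show "l \<le> n"
    using arg_cong[OF drop, of length] zbar by auto
qed

lemma eta_end_paths:
  "a \<in> paths n \<Longrightarrow> \<omega> \<in> space M \<Longrightarrow> eta T (\<omega>, zs) a (length a) = (T (xhat n) \<omega>, zbar)"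
  using eta_end[of zs a \<omega>] paths_D[of a n] zs by simp

definition "steps p q = map (\<lambda>n. xhat (Suc n) - xhat n) [p..<q]"

lemma set_steps: "set (steps p q) \<subseteq> R"
  using xhat_step by (auto simp: steps_def)

lemma sum_list_steps: "p \<le> q \<Longrightarrow> sum_list (steps p q) = xhat q - xhat p"
  by (induction q rule: dec_induct) (simp_all add: steps_def)

definition "some_path n = (SOME a. a \<in> paths n)"

definition "path_avg n \<omega> =
  (if paths n = {} then 0 else \<bar>path_sum T F (\<omega>, zs) (some_path n)\<bar> / real n)"

lemma some_path: "paths n \<noteq> {} \<Longrightarrow> some_path n \<in> paths n"
  unfolding some_path_def by (rule someI_ex) auto

lemma path_avg_nonneg: "0 \<le> path_avg n \<omega>"
  by (simp add: path_avg_def)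

lemma max_avg_eq_path_avg:
  assumes indep: "path_independent \<omega>" and \<omega>: "\<omega> \<in> space M"
  shows "max_avg R l T F xhat zs zbar n \<omega> = path_avg n \<omega>"
proof (cases "paths n = {}")
  case False
  have "path_sum T F (\<omega>, zs) a = path_sum T F (\<omega>, zs) (some_path n)" if a: "a \<in> paths n" for a
    using some_path[OF False] a paths_D eta_end_paths[OF _ \<omega>]
    by (intro path_independentD[OF indep zs_state]) auto
  then have "(\<lambda>a. \<bar>path_sum T F (\<omega>, zs) a / real n\<bar>) ` paths n = {path_avg n \<omega>}"
    using False by (auto simp: path_avg_def)
  then show ?thesis
    unfolding max_avg_def using path_avg_nonneg[of n \<omega>] by (simp add: max_def)
qed (simp add: max_avg_def path_avg_def)

lemma path_avg_measurable [measurable]: "path_avg n \<in> borel_measurable M"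
proof (cases "paths n = {}")
  case False
  then have "path_avg n = (\<lambda>\<omega>. \<bar>path_sum T F (\<omega>, zs) (some_path n)\<bar> / real n)"
    by (simp add: path_avg_def fun_eq_iff)
  then show ?thesis
    using zs_state paths_D(2)[OF some_path[OF False]] by simp
next
  case True
  then have "path_avg n = (\<lambda>\<omega>. 0)"
    by (simp add: path_avg_def fun_eq_iff)
  then show ?thesis by simp
qed

definition "path_position n i = (if paths n = {} then 0 else sum_list (take i (zs @ some_path n)))"

lemma path_position_in_G: "path_position n i \<in> G"
  using sum_list_take_in_G[OF zs_state] paths_D(2)[OF some_path] gen_zero[of R] by (simp add: path_position_def)

lemma path_avg_le_envelope_average:
  assumes \<omega>: "\<omega> \<in> space M"
  shows "path_avg n \<omega> \<le> (\<Sum>i<n. envelope (T (path_position n i) \<omega>)) / real n"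
proof (cases "paths n = {}")
  case False
  have "\<bar>path_sum T F (\<omega>, zs) (some_path n)\<bar> \<le> (\<Sum>i<n. envelope (T (path_position n i) \<omega>))"
    using abs_path_sum_le[OF zs_state paths_D(2)[OF some_path[OF False]] \<omega>]
      paths_D(1)[OF some_path[OF False]] False
    by (simp add: path_position_def)
  then show ?thesis
    using False by (simp add: path_avg_def divide_right_mono)
qed (simp add: path_avg_def sum_nonneg envelope_nonneg)

lemma integrable_path_avg: "integrable M (path_avg n)"
proof (rule Bochner_Integration.integrable_bound[OF _ path_avg_measurable])
  show "integrable M (\<lambda>\<omega>. (\<Sum>i<n. envelope (T (path_position n i) \<omega>)) / real n)"
    by (intro integrable_divide Bochner_Integration.integrable_sum integrable_T[OF path_position_in_G]
        integrable_envelope)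
  show "AE \<omega> in M. norm (path_avg n \<omega>) \<le> norm ((\<Sum>i<n. envelope (T (path_position n i) \<omega>)) / real n)"
  proof (rule AE_I2)
    fix \<omega> assume "\<omega> \<in> space M"
    then show "norm (path_avg n \<omega>) \<le> norm ((\<Sum>i<n. envelope (T (path_position n i) \<omega>)) / real n)"
      unfolding real_norm_def abs_of_nonneg[OF path_avg_nonneg]
      by (rule order_trans[OF path_avg_le_envelope_average abs_ge_self])
  qed
qed

lemma abs_path_sum_tail_le:
  assumes \<omega>: "\<omega> \<in> space M"
  shows "\<bar>path_sum T F (\<omega>, block_state) (steps (n div b * b) n @ zbar)\<bar>
    \<le> real (b + l) * local_envelope (b + 2 * l) \<omega>"
proof -
  let ?t = "steps (n div b * b) n @ zbar"
  have length_t: "length ?t \<le> b + l"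
    using zbar b_pos mod_less_divisor[of b n] by (simp add: steps_def minus_div_mult_eq_mod)
  have "\<bar>path_sum T F (\<omega>, block_state) ?t\<bar> \<le> real (length ?t) * local_envelope (b + 2 * l) \<omega>"
    using set_steps zbar length_t \<omega>
    by (intro abs_path_sum_le_local_envelope block_state_in_states) auto
  also have "\<dots> \<le> real (b + l) * local_envelope (b + 2 * l) \<omega>"
    using length_t local_envelope_nonneg by (intro mult_right_mono) auto
  finally show ?thesis .
qed

end

text \<open>A path \<open>q\<close> from the initial state \<open>zs\<close> to a lattice point \<open>m v\<close> on the ray; appending \<open>l\<close>
  periods of \<open>c\<close> then reaches the periodic state.\<close>
locale prefixed_direction = rational_direction M R T l F b c xhat zs zbar
  for M :: "'a measure" and R :: "(int ^ 'd) set" and T l F b c xhat zs zbar +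
  fixes q :: "(int ^ 'd) list" and m :: nat
  assumes set_q: "set q \<subseteq> R" and sum_q: "sum_list zs + sum_list q = of_nat m * v"
begin

definition "lead = q @ list_pow c l"

definition "lead_end = sum_list zs + sum_list (take (length lead - l) lead)"

definition "periods n = n div b - (m + l)"

definition "competitor n = lead @ list_pow c (periods n) @ steps (n div b * b) n @ zbar"

lemma set_lead: "set lead \<subseteq> R"
  using set_q set_list_pow_c by (auto simp: lead_def)

lemma lead_end_in_G: "lead_end \<in> G"
  unfolding lead_end_def using sum_list_take_in_G[OF zs_state set_lead, of "length zs + (length lead - l)"] by simp

lemma eta_end_lead:
  assumes \<omega>: "\<omega> \<in> space M"
  shows "eta T (\<omega>, zs) lead (length lead) = (T lead_end \<omega>, block_state)"
proof -
  have "l \<le> length lead"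
    using l_le_l_mult_b by (simp add: lead_def trans_le_add2)
  then show ?thesis
    using eta_end[OF zs(1) set_lead \<omega>] zs(2) drop_append_list_pow
    by (simp add: lead_end_def lead_def)
qed

lemma set_competitor: "set (competitor n) \<subseteq> R"
  using set_lead set_list_pow_c set_steps zbar by (auto simp: competitor_def)

lemma eta_end_competitor:
  assumes n: "m + l \<le> n div b" and \<omega>: "\<omega> \<in> space M"
  shows "eta T (\<omega>, zs) (competitor n) (length (competitor n)) = (T (xhat n) \<omega>, zbar)"
proof -
  let ?X = "lead @ list_pow c (periods n) @ steps (n div b * b) n"
  have "sum_list zs + sum_list ?X
      = of_nat (m + l) * v + of_nat (periods n) * v + (xhat n - xhat (n div b * b))"
    using sum_q by (simp add: lead_def sum_list_pow_c sum_list_steps distrib_right add_ac)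
  also have "\<dots> = xhat n"
    using n xhat_mult_v[of "n div b"] by (simp add: periods_def distrib_right[symmetric])
  finally have "sum_list zs + sum_list ?X = xhat n" .
  moreover have "competitor n = ?X @ zbar"
    by (simp add: competitor_def)
  ultimately show ?thesis
    using eta_end[OF zs(1) set_competitor \<omega>, of n] zs zbar by simp
qed

lemma path_sum_competitor:
  assumes \<omega>: "\<omega> \<in> space M"
  shows "path_sum T F (\<omega>, zs) (competitor n) = path_sum T F (\<omega>, zs) lead
    + block_sum (periods n) (T lead_end \<omega>)
    + path_sum T F ((T v ^^ periods n) (T lead_end \<omega>), block_state) (steps (n div b * b) n @ zbar)"
  using eta_end_lead[OF \<omega>] path_sum_list_pow[OF T_space[OF lead_end_in_G \<omega>]]
    eta_list_pow[OF T_space[OF lead_end_in_G \<omega>]]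
  by (simp add: competitor_def path_sum_append add.assoc)

text \<open>The error made on the last, incomplete period and on the final \<open>l\<close> steps.\<close>
definition "tail_error k \<omega> =
  \<bar>block_avg k \<omega>\<bar> + real (b + l) * (local_envelope (b + 2 * l) ((T v ^^ k) \<omega>) / real k)"

lemma path_avg_le_competitor:
  assumes indep: "path_independent \<omega>" and \<omega>: "\<omega> \<in> space M" and n: "m + l + 1 \<le> n div b"
  shows "path_avg n \<omega> \<le> \<bar>path_sum T F (\<omega>, zs) lead\<bar> / real n + tail_error (periods n) (T lead_end \<omega>)"
proof (cases "paths n = {}")
  case False
  let ?j = "periods n" and ?\<omega>' = "T lead_end \<omega>"
  let ?E = "local_envelope (b + 2 * l) ((T v ^^ periods n) (T lead_end \<omega>))"
  have j: "1 \<le> ?j" "?j \<le> n"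
    using n by (auto simp: periods_def intro: order_trans[OF diff_le_self div_le_dividend])
  have tail: "\<bar>path_sum T F ((T v ^^ ?j) ?\<omega>', block_state) (steps (n div b * b) n @ zbar)\<bar>
      \<le> real (b + l) * ?E"
    by (rule abs_path_sum_tail_le[OF shift.funpow_space[OF T_space[OF lead_end_in_G \<omega>]]])
  have "path_sum T F (\<omega>, zs) (some_path n) = path_sum T F (\<omega>, zs) (competitor n)"
    using some_path[OF False] eta_end_paths[OF _ \<omega>] eta_end_competitor[OF _ \<omega>] n set_competitor
    by (intro path_independentD[OF indep zs_state]) (auto dest: paths_D)
  then have "path_avg n \<omega> * real n \<le> \<bar>path_sum T F (\<omega>, zs) lead\<bar> + (\<bar>block_sum ?j ?\<omega>'\<bar> + real (b + l) * ?E)"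
    using False j tail by (simp add: path_avg_def path_sum_competitor[OF \<omega>])
  also have "\<bar>block_sum ?j ?\<omega>'\<bar> + real (b + l) * ?E \<le> real n * tail_error ?j ?\<omega>'"
  proof -
    have "\<bar>block_sum ?j ?\<omega>'\<bar> + real (b + l) * ?E = real ?j * tail_error ?j ?\<omega>'"
      using j by (simp add: tail_error_def block_avg_def field_simps)
    also have "\<dots> \<le> real n * tail_error ?j ?\<omega>'"
      using j local_envelope_nonneg by (intro mult_right_mono) (auto simp: tail_error_def)
    finally show ?thesis .
  qed
  finally show ?thesis
    using j by (simp add: field_simps)
qed (use local_envelope_nonneg in \<open>simp add: path_avg_def tail_error_def\<close>)

lemma periods_tendsto: "filterlim periods at_top sequentially"
  unfolding filterlim_at_top
proof
  fix k
  show "eventually (\<lambda>n. k \<le> periods n) sequentially"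
    using eventually_ge_at_top[of "(k + m + l) * b"]
  proof (rule eventually_mono)
    fix n assume "(k + m + l) * b \<le> n"
    then have "(k + m + l) * b div b \<le> n div b" by (rule div_le_mono)
    then show "k \<le> periods n" using b_pos by (simp add: periods_def)
  qed
qed

lemma AE_tail_error_tendsto_0: "AE \<omega> in M. (\<lambda>k. tail_error k (T lead_end \<omega>)) \<longlonglongrightarrow> 0"
proof -
  have "AE \<omega> in M. (\<lambda>k. block_avg k (T lead_end \<omega>)) \<longlonglongrightarrow> 0"
    using AE_T[OF lead_end_in_G AE_block_avg_tendsto_0] .
  moreover have "AE \<omega> in M. (\<lambda>k. local_envelope (b + 2 * l) ((T v ^^ k) (T lead_end \<omega>)) / real k) \<longlonglongrightarrow> 0"
    using AE_T[OF lead_end_in_G shift.AE_funpow_div_tendsto_0[OF integrable_local_envelope local_envelope_nonneg]] .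
  ultimately show ?thesis
    unfolding tail_error_def
  proof eventually_elim
    case (elim \<omega>)
    then show ?case
      using tendsto_add[OF tendsto_rabs[OF elim(1)] tendsto_mult[OF tendsto_const elim(2)]] by simp
  qed
qed

lemma AE_path_avg_tendsto_0_via_competitor: "AE \<omega> in M. (\<lambda>n. path_avg n \<omega>) \<longlonglongrightarrow> 0"
  using AE_tail_error_tendsto_0 AE_path_independent AE_space
proof eventually_elim
  case (elim \<omega>)
  let ?bound = "\<lambda>n. \<bar>path_sum T F (\<omega>, zs) lead\<bar> / real n + tail_error (periods n) (T lead_end \<omega>)"
  have "?bound \<longlonglongrightarrow> 0"
    using tendsto_add[OF tendsto_const_div_real filterlim_compose[OF elim(1) periods_tendsto]] by simp
  moreover have "eventually (\<lambda>n. path_avg n \<omega> \<le> ?bound n) sequentially"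
    using eventually_ge_at_top[of "(m + l + 1) * b"]
  proof (rule eventually_mono)
    fix n assume "(m + l + 1) * b \<le> n"
    then have "m + l + 1 \<le> n div b"
      using b_pos div_le_mono[of "(m + l + 1) * b" n b] by simp
    then show "path_avg n \<omega> \<le> ?bound n"
      by (rule path_avg_le_competitor[OF elim(2,3)])
  qed
  ultimately show ?case
    using path_avg_nonneg by (auto intro: tendsto_sandwich[OF _ _ tendsto_const])
qed

end

context rational_direction
begin

lemma exists_lead:
  assumes "a \<in> paths n"
  shows "\<exists>q m. set q \<subseteq> R \<and> sum_list zs + sum_list q = of_nat m * v"
proof (intro exI conjI)
  let ?q = "take (n - l) a @ steps n (n * b)"
  show "set ?q \<subseteq> R"
    using paths_D(2)[OF assms] set_take_subset[of "n - l" a] set_steps by auto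
  have "n \<le> n * b" using b_pos by simp
  then show "sum_list zs + sum_list ?q = of_nat n * v"
    using paths_D(3)[OF assms] xhat_mult_v[of n] by (simp add: sum_list_steps add.assoc[symmetric])
qed

lemma AE_path_avg_tendsto_0: "AE \<omega> in M. (\<lambda>n. path_avg n \<omega>) \<longlonglongrightarrow> 0"
proof (cases "\<exists>n. paths n \<noteq> {}")
  case True
  then obtain q m where "set q \<subseteq> R" "sum_list zs + sum_list q = of_nat m * v"
    using exists_lead by blast
  then interpret prefixed_direction M R T l F b c xhat zs zbar q m
    by unfold_locales
  show ?thesis by (rule AE_path_avg_tendsto_0_via_competitor)
qed (simp add: path_avg_def)

lemma integral_path_avg_tendsto_0: "(\<lambda>n. integral\<^sup>L M (path_avg n)) \<longlonglongrightarrow> 0"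
  using integrable_envelope envelope_nonneg path_position_in_G integrable_path_avg path_avg_nonneg
    path_avg_le_envelope_average AE_path_avg_tendsto_0
  by (intro integral_tendsto_0_of_translate_average_bound) auto

end

lemma vec_of_int_of_nat_mult: "vec_of_int ((of_nat j :: int ^ 'd) * x) = real j *\<^sub>R vec_of_int x"
  by (simp add: vec_eq_iff vec_of_int_def of_nat_index)

lemma vec_of_int_inject: "vec_of_int (x :: int ^ 'd) = vec_of_int y \<longleftrightarrow> x = y"
  by (simp add: vec_eq_iff vec_of_int_def)

theorem lemma2p9:
  fixes M :: "'a measure" and R :: "(int ^ 'd) set" and T :: "int ^ 'd \<Rightarrow> 'a \<Rightarrow> 'a"
    and l :: nat and F :: "'a \<times> (int ^ 'd) list \<Rightarrow> int ^ 'd \<Rightarrow> real"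
    and \<xi> :: "real ^ 'd" and b :: nat and xhat :: "nat \<Rightarrow> int ^ 'd"
    and zs zbar :: "(int ^ 'd) list"
  assumes finR: "finite R"
    and sys: "ergodic_system M R T"
    and K: "classK M R T l F"
    and rat: "rat_vec \<xi>"
    and inU: "\<xi> \<in> convex hull (vec_of_int ` R)"
    and b_pos: "b \<ge> 1"
    and b_D: "of_nat b *\<^sub>R \<xi> \<in> vec_of_int ` Dn R b"
    and xhat0: "xhat 0 = 0"
    and xhat_step: "\<And>n. xhat (Suc n) - xhat n \<in> R"
    and xhat_b: "\<And>j. vec_of_int (xhat (j * b)) = of_nat (j * b) *\<^sub>R \<xi>"
    and zs: "set zs \<subseteq> R" "length zs = l"
    and zbar: "set zbar \<subseteq> R" "length zbar = l"
  shows "(\<lambda>n. \<integral>\<^sup>+ \<omega>. ennreal (max_avg R l T F xhat zs zbar n \<omega>) \<partial>M) \<longlonglongrightarrow> 0 \<and>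
         (AE \<omega> in M. (\<lambda>n. max_avg R l T F xhat zs zbar n \<omega>) \<longlonglongrightarrow> 0)"
proof -
  obtain c where c: "length c = b" "set c \<subseteq> R" "of_nat b *\<^sub>R \<xi> = vec_of_int (sum_list c)"
    using b_D unfolding Dn_def by auto
  have "xhat (j * b) = of_nat j * sum_list c" for j
  proof -
    have "vec_of_int (xhat (j * b)) = real j *\<^sub>R (of_nat b *\<^sub>R \<xi>)"
      using xhat_b[of j] by (simp add: scaleR_scaleR)
    also have "\<dots> = vec_of_int (of_nat j * sum_list c)"
      by (simp add: c(3) vec_of_int_of_nat_mult)
    finally show ?thesis by (simp only: vec_of_int_inject)
  qed
  then interpret rational_direction M R T l F b c xhat zs zbar
    using sys finR K b_pos c xhat_step zs zbar
    by unfold_locales auto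
  have AE_eq: "AE \<omega> in M. \<forall>n. max_avg R l T F xhat zs zbar n \<omega> = path_avg n \<omega>"
    using AE_path_independent AE_space by eventually_elim (simp add: max_avg_eq_path_avg)
  have "(\<integral>\<^sup>+ \<omega>. ennreal (max_avg R l T F xhat zs zbar n \<omega>) \<partial>M) = ennreal (integral\<^sup>L M (path_avg n))" for n
    using AE_eq nn_integral_eq_integral[OF integrable_path_avg] path_avg_nonneg
    by (subst nn_integral_cong_AE[where v = "\<lambda>\<omega>. ennreal (path_avg n \<omega>)"]) (auto elim: eventually_mono)
  moreover have "AE \<omega> in M. (\<lambda>n. max_avg R l T F xhat zs zbar n \<omega>) \<longlonglongrightarrow> 0"
    using AE_eq AE_path_avg_tendsto_0 by eventually_elim simp
  ultimately show ?thesis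
    using tendsto_ennrealI[OF integral_path_avg_tendsto_0] by simp
qed

end
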